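(* Let $n\ge1$, $\beta\in\mathbb C\setminus\{0\}$, $1\le m\le n$ and $a_1,\dots,a_m,b_1,\dots,b_m\in\{1,\dots,n\}$. In $OY_\beta(\mathfrak{gl}_n)$, for all $i,j\in\{1,\dots,m\}$, $$[\tilde T_{a_ib_j}(u),\tilde t^{a_1\dots a_m}_{b_1\dots b_m}(v)]=0.$$
   Context: $OY_\beta(\mathfrak{gl}_n)$ is the unital associative $\mathbb C$-algebra with generators $\tilde t^{(r)}_{ij}$ ($r\ge1$) and relations $\left(u+\frac\beta u-v-\frac\beta v\right)[\tilde T_{ij}(u),\tilde T_{kl}(v)]=\tilde T_{kj}(u)\tilde T_{il}(v)-\tilde T_{kj}(v)\tilde T_{il}(u)$, $\tilde T_{ij}(u)=\delta_{ij}+\sum_{r\ge1}\tilde t^{(r)}_{ij}u^{-r}$. For $c\in\mathbb C$, $\phi_c(u)$ is the unique series in $u+\mathbb C[[u^{-1}]]$ with $\phi_c(u)+\beta/\phi_c(u)=u+\beta/u+c$, and $\tilde T_{ij}(\phi(u)):=\sum_r\tilde t^{(r)}_{ij}\phi(u)^{-r}$ expanded in $u^{-1}$. $\tilde T_p(v)=\sum_{i,j}1^{\otimes(p-1)}\otimes E_{ij}\otimes1^{\otimes(m-p)}\otimes\tilde T_{ij}(v)$, and $A_m$ is the antisymmetrizer on $(\mathbb C^n)^{\otimes m}$. The quantum minors $\tilde t^{a_1\dots a_m}_{b_1\dots b_m}(u)$ are defined by $A_m\tilde T_1(u)\tilde T_2(\phi_{-1}(u))\cdots\tilde T_m(\phi_{-(m-1)}(u))=\sum_{a_i,b_j}E_{a_1b_1}\otimes\cdots\otimes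 E_{a_mb_m}\otimes\tilde t^{a_1\dots a_m}_{b_1\dots b_m}(u)$. *)

theory Defs
  imports "HOL-Computational_Algebra.Formal_Laurent_Series" "HOL-Combinatorics.Permutations"
    "HOL-Library.FuncSet"
begin

(* A unital associative C-algebra: a ring_1 'A with a central unital ring
   homomorphism sc : C -> 'A (scalar c acts as multiplication by sc c). *)
definition is_calg :: "(complex \<Rightarrow> 'A::ring_1) \<Rightarrow> bool" where
  "is_calg sc \<longleftrightarrow> sc 1 = 1 \<and> (\<forall>x y. sc (x + y) = sc x + sc y)
     \<and> (\<forall>x y. sc (x * y) = sc x * sc y) \<and> (\<forall>c z. sc c * z = z * sc c)"

definition comm :: "'A::ring \<Rightarrow> 'A \<Rightarrow> 'A" where
  "comm x y = x * y - y * x"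

definition tt :: "(nat \<Rightarrow> nat \<Rightarrow> nat \<Rightarrow> 'A::ring_1) \<Rightarrow> nat \<Rightarrow> nat \<Rightarrow> nat \<Rightarrow> 'A" where
  "tt t r i j = (if r = 0 then (if i = j then 1 else 0) else t r i j)"

(* The defining relations of OY_beta(gl_n), written coefficientwise:
   the coefficient of u^{-r} v^{-s} (r,s >= 0) of
   (u + beta/u - v - beta/v)[T_ij(u),T_kl(v)] = T_kj(u)T_il(v) - T_kj(v)T_il(u). *)
definition OY_rel :: "(complex \<Rightarrow> 'A::ring_1) \<Rightarrow> complex \<Rightarrow> nat \<Rightarrow> (nat \<Rightarrow> nat \<Rightarrow> nat \<Rightarrow> 'A) \<Rightarrow> bool" where
  "OY_rel sc \<beta> n t \<longleftrightarrow>
    (\<forall>i\<in>{1..n}. \<forall>j\<in>{1..n}. \<forall>k\<in>{1..n}. \<forall>l\<in>{1..n}. \<forall>r s :: nat.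
       comm (tt t (r + 1) i j) (tt t s k l)
       + (if r \<ge> 1 then sc \<beta> * comm (tt t (r - 1) i j) (tt t s k l) else 0)
       - comm (tt t r i j) (tt t (s + 1) k l)
       - (if s \<ge> 1 then sc \<beta> * comm (tt t r i j) (tt t (s - 1) k l) else 0)
       = tt t r k j * tt t s i l - tt t s k j * tt t r i l)"

(* phi_c(u), as a Laurent series in the variable X = u^{-1}:
   the unique phi in u + C[[u^{-1}]] with phi + beta/phi = u + beta/u + c. *)
definition phi_ser :: "complex \<Rightarrow> complex \<Rightarrow> complex fls" where
  "phi_ser \<beta> c = (THE \<phi>. (\<exists>g :: complex fps. \<phi> = fls_X_inv + fps_to_fls g)
      \<and> \<phi> + fls_const \<beta> / \<phi> = fls_X_inv + fls_const \<beta> * fls_X + fls_const c)"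

(* Coefficient of u^{-N} in T_ij(phi_c(u)) = sum_r t^{(r)}_ij phi_c(u)^{-r}
   (only r <= N contribute, since phi_c(u)^{-r} lies in u^{-r} C[[u^{-1}]]). *)
definition Tphi :: "(complex \<Rightarrow> 'A::ring_1) \<Rightarrow> (nat \<Rightarrow> nat \<Rightarrow> nat \<Rightarrow> 'A) \<Rightarrow> complex \<Rightarrow> complex
    \<Rightarrow> nat \<Rightarrow> nat \<Rightarrow> nat \<Rightarrow> 'A" where
  "Tphi sc t \<beta> c N i j = (\<Sum>r\<in>{0..N}. sc (fls_nth (inverse (phi_ser \<beta> c) ^ r) (int N)) * tt t r i j)"

(* Coefficient of v^{-N} in the quantum minor t^{a_1..a_m}_{b_1..b_m}(v), i.e. the
   (a,b) matrix entry of A_m T_1(v) T_2(phi_{-1}(v)) ... T_m(phi_{-(m-1)}(v)),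
   with A_m = (1/m!) sum_sigma sgn(sigma) P_sigma the antisymmetrizer. *)
definition qminor :: "(complex \<Rightarrow> 'A::ring_1) \<Rightarrow> (nat \<Rightarrow> nat \<Rightarrow> nat \<Rightarrow> 'A) \<Rightarrow> complex
    \<Rightarrow> nat \<Rightarrow> (nat \<Rightarrow> nat) \<Rightarrow> (nat \<Rightarrow> nat) \<Rightarrow> nat \<Rightarrow> 'A" where
  "qminor sc t \<beta> m a b N =
     sc (inverse (of_nat (fact m))) *
     (\<Sum>\<sigma> | \<sigma> permutes {1..m}. of_int (sign \<sigma>) *
       (\<Sum>Ns \<in> {Ns \<in> {1..m} \<rightarrow>\<^sub>E {0..N}. sum Ns {1..m} = N}.
          prod_list (map (\<lambda>k. Tphi sc t \<beta> (- of_nat (k - 1)) (Ns k) (a (\<sigma> k)) (b k)) [1..<m+1])))"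

end

(* Write x = u^-1, y = v^-1 and read T_ij(u), T_ij(v) as power series over the algebra. Multiplied
   by x y, the defining relation becomes an identity of two-variable series; substituting
   v -> phi_{-r}(v) turns it into an exchange relation between T(u) and T^(r)(v) = T(phi_{-r}(v))
   with scalar factor u + beta/u - v - beta/v + r. Substituting moreover u -> phi_{-r}(u) into the
   relation for T^(r+1) and setting u = v gives the fusion relation
   [T^(r)_ij, T^(r+1)_kl] = T^(r)_kj T^(r+1)_il - T^(r+1)_kj T^(r)_il, whose factor has become 1.
   The quantum minor is the antisymmetrised product of T^(0)(v), ..., T^(m-1)(v). Expanding it
   along its first column and inducting on its size, these two relations give
   (u + beta/u - v - beta/v) [T_kl(u), minor] = sum of the minors with one row index replaced by k
   or one column index replaced by l. The fusion relation makes minors antisymmetric in their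
   columns, so for k = a_i, l = b_j only the two terms reproducing the minor survive, and together
   they give [T_kl(u), minor] back. Hence (u + beta/u - v - beta/v - 1) [T_kl(u), minor] = 0, and
   this factor is not a zero divisor. *)

theory Submission
  imports Defs
begin

locale ring_1_hom =
  fixes h :: "'a::ring_1 \<Rightarrow> 'b::ring_1"
  assumes hom_add: "h (x + y) = h x + h y"
    and hom_mult: "h (x * y) = h x * h y"
    and hom_one: "h 1 = 1"
begin

lemma hom_zero [simp]: "h 0 = 0"
  using hom_add[of 0 0] by simp

lemma hom_minus: "h (- x) = - h x"
  using hom_add[of x "- x"] by (simp add: eq_neg_iff_add_eq_0 add.commute)

lemma hom_diff: "h (x - y) = h x - h y"
  using hom_add[of x "- y"] hom_minus[of y] by simp

lemma hom_sum: "h (sum f A) = (\<Sum>i\<in>A. h (f i))"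
  by (induction A rule: infinite_finite_induct) (simp_all add: hom_add)

lemma hom_of_nat: "h (of_nat n) = of_nat n"
  by (induction n) (simp_all add: hom_add hom_one)

lemma hom_of_int: "h (of_int z) = of_int z"
  by (cases z rule: int_cases) (simp_all add: hom_of_nat hom_minus hom_diff hom_one)

lemma hom_power: "h (x ^ n) = h x ^ n"
  by (induction n) (simp_all add: hom_mult hom_one)

lemma hom_prod_list: "h (prod_list xs) = prod_list (map h xs)"
  by (induction xs) (simp_all add: hom_mult hom_one)

end

lemma ring_1_hom_id: "ring_1_hom (\<lambda>x. x)"
  by unfold_locales simp_all

lemma ring_1_hom_fps_const: "ring_1_hom fps_const"
  by unfold_locales simp_all

section \<open>Antisymmetrisation over permutations\<close>

definition alt_sum :: "nat set \<Rightarrow> ((nat \<Rightarrow> nat) \<Rightarrow> 'a::ring_1) \<Rightarrow> (nat \<Rightarrow> nat) \<Rightarrow> 'a" where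
  "alt_sum I F \<alpha> = (\<Sum>\<sigma> | \<sigma> permutes I. of_int (sign \<sigma>) * F (\<alpha> \<circ> \<sigma>))"

lemma sign_compose_permutes:
  assumes "finite I" "\<sigma> permutes I" "\<tau> permutes I"
  shows "sign (\<sigma> \<circ> \<tau>) = sign \<sigma> * sign \<tau>"
  using assms by (intro sign_compose) (auto intro: permutes_imp_permutation)

lemma of_int_mult_left_commute: "of_int z * (c * x) = c * (of_int z * (x::'a::ring_1))"
  by (metis mult.assoc mult_of_int_commute)

lemma of_nat_mult_left_commute: "x * (of_nat n * y) = of_nat n * (x * (y::'a::ring_1))"
  by (metis mult.assoc mult_of_nat_commute)

lemma alt_sum_compose_permutes:
  assumes "finite I" "\<tau> permutes I"
  shows "alt_sum I F (\<alpha> \<circ> \<tau>) = of_int (sign \<tau>) * alt_sum I F \<alpha>"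
proof -
  have inv: "inv \<tau> permutes I"
    using assms(2) by (rule permutes_inv)
  have "alt_sum I F (\<alpha> \<circ> \<tau>) =
      (\<Sum>\<sigma> | \<sigma> permutes I. of_int (sign (inv \<tau> \<circ> \<sigma>)) * F (\<alpha> \<circ> \<tau> \<circ> (inv \<tau> \<circ> \<sigma>)))"
    unfolding alt_sum_def by (rule setum_permutations_compose_left[OF inv])
  also have "\<dots> = (\<Sum>\<sigma> | \<sigma> permutes I. of_int (sign \<tau>) * (of_int (sign \<sigma>) * F (\<alpha> \<circ> \<sigma>)))"
  proof (rule sum.cong[OF refl])
    fix \<sigma> assume "\<sigma> \<in> {\<sigma>. \<sigma> permutes I}"
    then have "sign (inv \<tau> \<circ> \<sigma>) = sign \<tau> * sign \<sigma>"
      using sign_compose_permutes[OF assms(1) inv] assms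
      by (simp add: sign_inverse permutes_imp_permutation)
    moreover have "\<alpha> \<circ> \<tau> \<circ> (inv \<tau> \<circ> \<sigma>) = \<alpha> \<circ> \<sigma>"
      by (simp add: fun_eq_iff permutes_inverses(1)[OF assms(2)])
    ultimately show "of_int (sign (inv \<tau> \<circ> \<sigma>)) * F (\<alpha> \<circ> \<tau> \<circ> (inv \<tau> \<circ> \<sigma>)) =
        of_int (sign \<tau>) * (of_int (sign \<sigma>) * F (\<alpha> \<circ> \<sigma>))"
      by (simp add: mult.assoc)
  qed
  also have "\<dots> = of_int (sign \<tau>) * alt_sum I F \<alpha>"
    unfolding alt_sum_def by (simp add: sum_distrib_left)
  finally show ?thesis .
qed

lemma alt_sum_compose_swap:
  assumes "finite I" "i \<in> I" "j \<in> I" "i \<noteq> j"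
  shows "alt_sum I F (\<alpha> \<circ> Transposition.transpose i j) = - alt_sum I F \<alpha>"
  using alt_sum_compose_permutes[OF assms(1) permutes_swap_id[OF assms(2,3)]] assms(4)
  by (simp add: sign_swap_id)

lemma alt_sum_double:
  assumes "finite I" "i \<in> I" "j \<in> I" "i \<noteq> j"
  shows "alt_sum I F \<alpha> + alt_sum I F \<alpha> =
    (\<Sum>\<sigma> | \<sigma> permutes I. of_int (sign \<sigma>) * (F (\<alpha> \<circ> \<sigma>) - F (\<alpha> \<circ> \<sigma> \<circ> Transposition.transpose i j)))"
proof -
  let ?\<tau> = "Transposition.transpose i j"
  have \<tau>: "?\<tau> permutes I"
    using assms by (intro permutes_swap_id)
  have "alt_sum I F \<alpha> = (\<Sum>\<sigma> | \<sigma> permutes I. of_int (sign (\<sigma> \<circ> ?\<tau>)) * F (\<alpha> \<circ> (\<sigma> \<circ> ?\<tau>)))"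
    unfolding alt_sum_def by (rule sum_permutations_compose_right[OF \<tau>])
  also have "\<dots> = - (\<Sum>\<sigma> | \<sigma> permutes I. of_int (sign \<sigma>) * F (\<alpha> \<circ> \<sigma> \<circ> ?\<tau>))"
    unfolding sum_negf[symmetric]
  proof (rule sum.cong[OF refl])
    fix \<sigma> assume "\<sigma> \<in> {\<sigma>. \<sigma> permutes I}"
    then show "of_int (sign (\<sigma> \<circ> ?\<tau>)) * F (\<alpha> \<circ> (\<sigma> \<circ> ?\<tau>)) = - (of_int (sign \<sigma>) * F (\<alpha> \<circ> \<sigma> \<circ> ?\<tau>))"
      using sign_compose_permutes[OF assms(1) _ \<tau>, of \<sigma>] assms(4) by (simp add: sign_swap_id o_assoc)
  qed
  finally have "alt_sum I F \<alpha> + alt_sum I F \<alpha> =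
      alt_sum I F \<alpha> - (\<Sum>\<sigma> | \<sigma> permutes I. of_int (sign \<sigma>) * F (\<alpha> \<circ> \<sigma> \<circ> ?\<tau>))"
    by simp
  also have "\<dots> = (\<Sum>\<sigma> | \<sigma> permutes I. of_int (sign \<sigma>) * (F (\<alpha> \<circ> \<sigma>) - F (\<alpha> \<circ> \<sigma> \<circ> ?\<tau>)))"
    unfolding alt_sum_def by (simp add: sum_subtractf right_diff_distrib)
  finally show ?thesis .
qed

lemma alt_sum_cong:
  assumes "\<And>\<sigma>. \<sigma> permutes I \<Longrightarrow> F (\<alpha> \<circ> \<sigma>) = G (\<alpha>' \<circ> \<sigma>)"
  shows "alt_sum I F \<alpha> = alt_sum I G \<alpha>'"
  unfolding alt_sum_def using assms by (intro sum.cong) auto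

lemma alt_sum_add: "alt_sum I (\<lambda>\<beta>. F \<beta> + G \<beta>) \<alpha> = alt_sum I F \<alpha> + alt_sum I G \<alpha>"
  unfolding alt_sum_def by (simp add: distrib_left sum.distrib)

lemma alt_sum_diff: "alt_sum I (\<lambda>\<beta>. F \<beta> - G \<beta>) \<alpha> = alt_sum I F \<alpha> - alt_sum I G \<alpha>"
  unfolding alt_sum_def by (simp add: right_diff_distrib sum_subtractf)

lemma alt_sum_sum: "alt_sum I (\<lambda>\<beta>. \<Sum>j\<in>A. F j \<beta>) \<alpha> = (\<Sum>j\<in>A. alt_sum I (F j) \<alpha>)"
  unfolding alt_sum_def by (simp add: sum_distrib_left sum.swap[of _ A])

lemma alt_sum_mult_left: "alt_sum I (\<lambda>\<beta>. c * F \<beta>) \<alpha> = c * alt_sum I F \<alpha>"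
  unfolding alt_sum_def by (simp add: sum_distrib_left of_int_mult_left_commute)

lemma alt_sum_mult_right: "alt_sum I (\<lambda>\<beta>. F \<beta> * c) \<alpha> = alt_sum I F \<alpha> * c"
  unfolding alt_sum_def by (simp add: sum_distrib_right mult.assoc)

lemma alt_sum_fun_upd:
  assumes "finite I"
  shows "alt_sum I (\<lambda>\<beta>. \<Sum>i\<in>I. c (\<beta> i) * F (\<beta>(i := k))) \<alpha> = (\<Sum>i\<in>I. c (\<alpha> i) * alt_sum I F (\<alpha>(i := k)))"
proof -
  have "(\<Sum>i\<in>I. c ((\<alpha> \<circ> \<sigma>) i) * F ((\<alpha> \<circ> \<sigma>)(i := k))) = (\<Sum>i\<in>I. c (\<alpha> i) * F (\<alpha>(i := k) \<circ> \<sigma>))"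
    if \<sigma>: "\<sigma> permutes I" for \<sigma>
  proof -
    have "(\<alpha> \<circ> \<sigma>)(i := k) = \<alpha>(\<sigma> i := k) \<circ> \<sigma>" for i
      using permutes_inj[OF \<sigma>] by (auto simp: fun_eq_iff inj_eq)
    then have "(\<Sum>i\<in>I. c ((\<alpha> \<circ> \<sigma>) i) * F ((\<alpha> \<circ> \<sigma>)(i := k))) = (\<Sum>i\<in>I. c (\<alpha> (\<sigma> i)) * F (\<alpha>(\<sigma> i := k) \<circ> \<sigma>))"
      by simp
    also have "\<dots> = (\<Sum>i\<in>I. c (\<alpha> i) * F (\<alpha>(i := k) \<circ> \<sigma>))"
      using sum.reindex_bij_betw[OF permutes_imp_bij[OF \<sigma>], of "\<lambda>i. c (\<alpha> i) * F (\<alpha>(i := k) \<circ> \<sigma>)"] by simp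
    finally show ?thesis .
  qed
  then have "alt_sum I (\<lambda>\<beta>. \<Sum>i\<in>I. c (\<beta> i) * F (\<beta>(i := k))) \<alpha> =
      (\<Sum>\<sigma> | \<sigma> permutes I. of_int (sign \<sigma>) * (\<Sum>i\<in>I. c (\<alpha> i) * F (\<alpha>(i := k) \<circ> \<sigma>)))"
    unfolding alt_sum_def by (intro sum.cong) auto
  also have "\<dots> = (\<Sum>i\<in>I. c (\<alpha> i) * alt_sum I F (\<alpha>(i := k)))"
    unfolding alt_sum_def sum_distrib_left by (subst sum.swap) (simp add: of_int_mult_left_commute)
  finally show ?thesis .
qed

lemma alt_sum_alt_sum:
  assumes "finite I" "J \<subseteq> I"
  shows "alt_sum I (alt_sum J F) \<alpha> = of_nat (fact (card J)) * alt_sum I F \<alpha>"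
proof -
  have J: "finite J"
    using assms finite_subset by blast
  have "alt_sum I (alt_sum J F) \<alpha> =
      (\<Sum>\<rho> | \<rho> permutes J. \<Sum>\<sigma> | \<sigma> permutes I. of_int (sign (\<sigma> \<circ> \<rho>)) * F (\<alpha> \<circ> (\<sigma> \<circ> \<rho>)))"
    unfolding alt_sum_def sum_distrib_left
  proof (subst sum.swap, intro sum.cong refl)
    fix \<rho> \<sigma> assume "\<rho> \<in> {\<rho>. \<rho> permutes J}" "\<sigma> \<in> {\<sigma>. \<sigma> permutes I}"
    then have "sign (\<sigma> \<circ> \<rho>) = sign \<sigma> * sign \<rho>"
      using sign_compose_permutes[OF assms(1), of \<sigma> \<rho>] permutes_subset[of \<rho> J I] assms(2) by simp
    then show "of_int (sign \<sigma>) * (of_int (sign \<rho>) * F (\<alpha> \<circ> \<sigma> \<circ> \<rho>)) =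
        of_int (sign (\<sigma> \<circ> \<rho>)) * F (\<alpha> \<circ> (\<sigma> \<circ> \<rho>))"
      by (simp add: mult.assoc o_assoc)
  qed
  also have "\<dots> = (\<Sum>\<rho> | \<rho> permutes J. alt_sum I F \<alpha>)"
  proof (rule sum.cong[OF refl])
    fix \<rho> assume "\<rho> \<in> {\<rho>. \<rho> permutes J}"
    then have "\<rho> permutes I"
      using assms(2) by (auto intro: permutes_subset)
    then show "(\<Sum>\<sigma> | \<sigma> permutes I. of_int (sign (\<sigma> \<circ> \<rho>)) * F (\<alpha> \<circ> (\<sigma> \<circ> \<rho>))) = alt_sum I F \<alpha>"
      unfolding alt_sum_def by (rule sum_permutations_compose_right[symmetric])
  qed
  also have "\<dots> = of_nat (fact (card J)) * alt_sum I F \<alpha>"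
    using card_permutations[OF refl J] by simp
  finally show ?thesis .
qed

section \<open>Quantum minors from the exchange and fusion relations\<close>

text \<open>\<open>P i j\<close> stands for \<open>T_ij(u)\<close>, \<open>Q r i j\<close> for \<open>T_ij(phi_{-r}(v))\<close>, and \<open>D r / e\<close> for
  \<open>u + \<beta>/u - phi_{-r}(v) - \<beta>/phi_{-r}(v) = u + \<beta>/u - v - \<beta>/v + r\<close>.\<close>
locale minor_setting =
  fixes P :: "nat \<Rightarrow> nat \<Rightarrow> 'S::ring_1" and Q :: "nat \<Rightarrow> nat \<Rightarrow> nat \<Rightarrow> 'S"
    and smul :: "'K::comm_ring_1 \<Rightarrow> 'S \<Rightarrow> 'S"
    and D :: "int \<Rightarrow> 'K" and e :: 'K
  assumes smul_mult_left: "smul c x * y = smul c (x * y)"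
    and smul_mult_right: "x * smul c y = smul c (x * y)"
    and smul_smul: "smul c (smul c' x) = smul (c * c') x"
    and smul_add: "smul c (x + y) = smul c x + smul c y"
    and smul_add_left: "smul (c + c') x = smul c x + smul c' x"
    and D_plus_1: "D (z + 1) = D z + e"
    and exchange: "smul (D (int r)) (comm (P i j) (Q r k l)) = smul e (P k j * Q r i l - Q r k j * P i l)"
    and fusion: "comm (Q r i j) (Q (Suc r) k l) = Q r k j * Q (Suc r) i l - Q (Suc r) k j * Q r i l"
    and smul_D_cancel: "smul (D z) x = 0 \<Longrightarrow> x = 0"
    and of_nat_mult_cancel: "n > 0 \<Longrightarrow> of_nat n * x = 0 \<Longrightarrow> x = 0"
begin

lemma smul_zero [simp]: "smul c 0 = 0"
  using smul_add[of c 0 0] by simp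

lemma smul_minus: "smul c (- x) = - smul c x"
  using smul_add[of c x "- x"] by (simp add: eq_neg_iff_add_eq_0 add.commute)

lemma smul_diff: "smul c (x - y) = smul c x - smul c y"
  using smul_add[of c x "- y"] smul_minus[of c y] by simp

lemma smul_sum: "smul c (sum f A) = (\<Sum>j\<in>A. smul c (f j))"
  by (induction A rule: infinite_finite_induct) (simp_all add: smul_add)

lemmas smul_simps = smul_mult_left smul_mult_right smul_smul smul_add smul_add_left smul_minus smul_diff smul_sum

lemma double_eq_0_imp_eq_0: "(x::'S) + x = 0 \<Longrightarrow> x = 0"
  using of_nat_mult_cancel[of 2 x] by (simp add: mult_2)

lemma alt_sum_smul: "alt_sum I (\<lambda>\<beta>. smul c (F \<beta>)) \<alpha> = smul c (alt_sum I F \<alpha>)"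
  unfolding alt_sum_def by (simp add: smul_simps)

lemma alt_sum_eq_0_if_swap_invariant:
  fixes F :: "(nat \<Rightarrow> nat) \<Rightarrow> 'S"
  assumes "finite I" "i \<in> I" "j \<in> I" "i \<noteq> j"
    and "\<And>\<beta>. F (\<beta> \<circ> Transposition.transpose i j) = F \<beta>"
  shows "alt_sum I F \<alpha> = 0"
proof -
  have "alt_sum I F \<alpha> + alt_sum I F \<alpha> = 0"
    unfolding alt_sum_double[OF assms(1-4)] by (simp add: assms(5) o_assoc)
  then show ?thesis
    by (rule double_eq_0_imp_eq_0)
qed

lemma fusion_antisym:
  "Q r i l * Q (Suc r) k j - Q r k l * Q (Suc r) i j = - (Q r i j * Q (Suc r) k l - Q r k j * Q (Suc r) i l)"
proof -
  have "Q r i l * Q (Suc r) k j - Q r k l * Q (Suc r) i j + (Q r i j * Q (Suc r) k l - Q r k j * Q (Suc r) i l) =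
      (comm (Q r i l) (Q (Suc r) k j) - (Q r k l * Q (Suc r) i j - Q (Suc r) k l * Q r i j))
      + (comm (Q r i j) (Q (Suc r) k l) - (Q r k j * Q (Suc r) i l - Q (Suc r) k j * Q r i l))"
    by (simp add: comm_def algebra_simps)
  also have "\<dots> = 0"
    using fusion[of r i j k l] fusion[of r i l k j] by simp
  finally show ?thesis
    unfolding eq_neg_iff_add_eq_0 .
qed

text \<open>\<open>minor s m \<alpha> b\<close> is the quantum minor with rows \<open>\<alpha> s, ..., \<alpha> m\<close> and columns \<open>b s, ..., b m\<close>
  whose \<open>k\<close>-th factor is evaluated at \<open>phi_{-(k-1)}(v)\<close>, without the factor \<open>1/(m-s+1)!\<close>.\<close>
definition minor_term :: "nat \<Rightarrow> nat \<Rightarrow> (nat \<Rightarrow> nat) \<Rightarrow> (nat \<Rightarrow> nat) \<Rightarrow> 'S" where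
  "minor_term s m b \<beta> = prod_list (map (\<lambda>k. Q (k - 1) (\<beta> k) (b k)) [s..<Suc m])"

definition minor :: "nat \<Rightarrow> nat \<Rightarrow> (nat \<Rightarrow> nat) \<Rightarrow> (nat \<Rightarrow> nat) \<Rightarrow> 'S" where
  "minor s m \<alpha> b = alt_sum {s..m} (minor_term s m b) \<alpha>"

lemma minor_Suc_empty: "minor (Suc m) m \<alpha> b = 1"
  unfolding minor_def alt_sum_def minor_term_def by (simp add: permutes_empty)

lemma minor_term_Cons:
  assumes "s \<le> m"
  shows "minor_term s m b \<beta> = Q (s - 1) (\<beta> s) (b s) * minor_term (Suc s) m b \<beta>"
  unfolding minor_term_def using assms by (simp add: upt_conv_Cons del: upt_Suc)

lemma minor_cong:
  assumes "\<And>k. k \<in> {s..m} \<Longrightarrow> \<alpha> k = \<alpha>' k" "\<And>k. k \<in> {s..m} \<Longrightarrow> b k = b' k"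
  shows "minor s m \<alpha> b = minor s m \<alpha>' b'"
  unfolding minor_def
proof (rule alt_sum_cong)
  fix \<sigma> assume \<sigma>: "\<sigma> permutes {s..m}"
  show "minor_term s m b (\<alpha> \<circ> \<sigma>) = minor_term s m b' (\<alpha>' \<circ> \<sigma>)"
    unfolding minor_term_def
  proof (rule arg_cong[where f = prod_list], rule map_cong[OF refl])
    fix k assume "k \<in> set [s..<Suc m]"
    then have k: "k \<in> {s..m}"
      by auto
    then have "\<sigma> k \<in> {s..m}"
      using permutes_in_image[OF \<sigma>] by simp
    then show "Q (k - 1) ((\<alpha> \<circ> \<sigma>) k) (b k) = Q (k - 1) ((\<alpha>' \<circ> \<sigma>) k) (b' k)"
      using assms k by simp
  qed
qed

lemma minor_eq_0_if_rows_eq: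
  assumes "i \<in> {s..m}" "j \<in> {s..m}" "i \<noteq> j" "\<alpha> i = \<alpha> j"
  shows "minor s m \<alpha> b = 0"
proof -
  have \<alpha>: "\<alpha> \<circ> Transposition.transpose i j = \<alpha>"
    using assms(4) by (auto simp: fun_eq_iff transpose_def)
  have "minor s m \<alpha> b = - minor s m \<alpha> b"
    using alt_sum_compose_swap[OF finite_atLeastAtMost assms(1-3), of "minor_term s m b" \<alpha>]
    unfolding minor_def \<alpha> .
  then have "minor s m \<alpha> b + minor s m \<alpha> b = 0"
    by (metis add.right_inverse)
  then show ?thesis
    by (rule double_eq_0_imp_eq_0)
qed

text \<open>By the fusion relation, the part of a product that is antisymmetric in two adjacent rows is
  also antisymmetric in the corresponding columns.\<close>
lemma minor_term_swap_adjacent: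
  assumes "1 \<le> s" "s \<le> r" "Suc r \<le> m"
  defines "\<tau> \<equiv> Transposition.transpose r (Suc r)"
  shows "minor_term s m (b \<circ> \<tau>) \<beta> - minor_term s m (b \<circ> \<tau>) (\<beta> \<circ> \<tau>) =
    - (minor_term s m b \<beta> - minor_term s m b (\<beta> \<circ> \<tau>))"
proof -
  define A where "A = prod_list (map (\<lambda>k. Q (k - 1) (\<beta> k) (b k)) [s..<r])"
  define C where "C = prod_list (map (\<lambda>k. Q (k - 1) (\<beta> k) (b k)) [Suc (Suc r)..<Suc m])"
  have upt: "[s..<Suc m] = [s..<r] @ r # Suc r # [Suc (Suc r)..<Suc m]"
    using assms upt_add_eq_append[of s r "Suc m - r"] by (simp add: upt_conv_Cons)
  have split: "minor_term s m b' \<beta>' = A * (Q (r - 1) (\<beta>' r) (b' r) * Q r (\<beta>' (Suc r)) (b' (Suc r))) * C"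
    if "\<And>k. k \<noteq> r \<Longrightarrow> k \<noteq> Suc r \<Longrightarrow> b' k = b k \<and> \<beta>' k = \<beta> k" for b' \<beta>'
  proof -
    have same: "map (\<lambda>k. Q (k - 1) (\<beta>' k) (b' k)) [s..<r] = map (\<lambda>k. Q (k - 1) (\<beta> k) (b k)) [s..<r]"
      "map (\<lambda>k. Q (k - 1) (\<beta>' k) (b' k)) [Suc (Suc r)..<Suc m] = map (\<lambda>k. Q (k - 1) (\<beta> k) (b k)) [Suc (Suc r)..<Suc m]"
      using that by (auto intro!: map_cong)
    show ?thesis
      unfolding minor_term_def upt map_append list.map same by (simp add: A_def C_def mult.assoc del: upt_Suc)
  qed
  have r: "Suc (r - 1) = r"
    using assms by simp
  have "Q (r - 1) (\<beta> r) (b (Suc r)) * Q r (\<beta> (Suc r)) (b r) - Q (r - 1) (\<beta> (Suc r)) (b (Suc r)) * Q r (\<beta> r) (b r) =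
      - (Q (r - 1) (\<beta> r) (b r) * Q r (\<beta> (Suc r)) (b (Suc r)) - Q (r - 1) (\<beta> (Suc r)) (b r) * Q r (\<beta> r) (b (Suc r)))"
    using fusion_antisym[of "r - 1" "\<beta> r" "b (Suc r)" "\<beta> (Suc r)" "b r"] by (simp only: r)
  then have "A * (Q (r - 1) (\<beta> r) (b (Suc r)) * Q r (\<beta> (Suc r)) (b r) - Q (r - 1) (\<beta> (Suc r)) (b (Suc r)) * Q r (\<beta> r) (b r)) * C =
      A * (- (Q (r - 1) (\<beta> r) (b r) * Q r (\<beta> (Suc r)) (b (Suc r)) - Q (r - 1) (\<beta> (Suc r)) (b r) * Q r (\<beta> r) (b (Suc r)))) * C"
    by (simp only:)
  moreover have "minor_term s m b \<beta> = A * (Q (r - 1) (\<beta> r) (b r) * Q r (\<beta> (Suc r)) (b (Suc r))) * C"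
    "minor_term s m b (\<beta> \<circ> \<tau>) = A * (Q (r - 1) (\<beta> (Suc r)) (b r) * Q r (\<beta> r) (b (Suc r))) * C"
    "minor_term s m (b \<circ> \<tau>) \<beta> = A * (Q (r - 1) (\<beta> r) (b (Suc r)) * Q r (\<beta> (Suc r)) (b r)) * C"
    "minor_term s m (b \<circ> \<tau>) (\<beta> \<circ> \<tau>) = A * (Q (r - 1) (\<beta> (Suc r)) (b (Suc r)) * Q r (\<beta> r) (b r)) * C"
    by (subst split; simp add: \<tau>_def transpose_def)+
  ultimately show ?thesis
    by (simp add: algebra_simps)
qed

lemma minor_swap_adjacent_cols:
  assumes "1 \<le> s" "s \<le> r" "Suc r \<le> m"
  shows "minor s m \<alpha> (b \<circ> Transposition.transpose r (Suc r)) = - minor s m \<alpha> b"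
proof -
  let ?\<tau> = "Transposition.transpose r (Suc r)"
  have rr: "r \<in> {s..m}" "Suc r \<in> {s..m}" "r \<noteq> Suc r"
    using assms by auto
  have "minor s m \<alpha> (b \<circ> ?\<tau>) + minor s m \<alpha> (b \<circ> ?\<tau>) = - (minor s m \<alpha> b + minor s m \<alpha> b)"
    unfolding minor_def alt_sum_double[OF finite_atLeastAtMost rr] minor_term_swap_adjacent[OF assms]
    by (simp only: mult_minus_right sum_negf)
  then have "(minor s m \<alpha> (b \<circ> ?\<tau>) + minor s m \<alpha> b) + (minor s m \<alpha> (b \<circ> ?\<tau>) + minor s m \<alpha> b) = 0"
    by (simp add: algebra_simps)
  then have "minor s m \<alpha> (b \<circ> ?\<tau>) + minor s m \<alpha> b = 0"
    by (rule double_eq_0_imp_eq_0)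
  then show ?thesis
    by (simp add: eq_neg_iff_add_eq_0)
qed

lemma minor_swap_cols:
  assumes "1 \<le> s" "s \<le> i" "i < j" "j \<le> m"
  shows "minor s m \<alpha> (b \<circ> Transposition.transpose i j) = - minor s m \<alpha> b"
  using assms(2-4)
proof (induction "j - i" arbitrary: i b)
  case 0
  then show ?case by simp
next
  case (Suc d)
  show ?case
  proof (cases "j = Suc i")
    case True
    then show ?thesis
      using minor_swap_adjacent_cols[OF assms(1)] Suc.prems by simp
  next
    case False
    let ?\<tau>1 = "Transposition.transpose i (Suc i)" and ?\<tau>2 = "Transposition.transpose (Suc i) j"
    have "b \<circ> Transposition.transpose i j = b \<circ> ?\<tau>1 \<circ> ?\<tau>2 \<circ> ?\<tau>1"
      using False Suc.prems by (auto simp: fun_eq_iff transpose_def)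
    moreover have "minor s m \<alpha> (b \<circ> ?\<tau>1 \<circ> ?\<tau>2) = - minor s m \<alpha> (b \<circ> ?\<tau>1)"
      using Suc.hyps(1)[of "Suc i" "b \<circ> ?\<tau>1"] Suc.hyps(2) Suc.prems False by simp
    ultimately show ?thesis
      using minor_swap_adjacent_cols[OF assms(1), of i] Suc.prems False by simp
  qed
qed

lemma minor_eq_0_if_cols_eq:
  assumes "1 \<le> s" "i \<in> {s..m}" "j \<in> {s..m}" "i \<noteq> j" "b i = b j"
  shows "minor s m \<alpha> b = 0"
proof -
  have b: "b \<circ> Transposition.transpose (min i j) (max i j) = b"
    using assms(5) by (auto simp: fun_eq_iff transpose_def min_def max_def)
  have "minor s m \<alpha> (b \<circ> Transposition.transpose (min i j) (max i j)) = - minor s m \<alpha> b"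
    using assms by (intro minor_swap_cols) (auto simp: min_def max_def)
  then have "minor s m \<alpha> b + minor s m \<alpha> b = 0"
    unfolding b by (metis add.right_inverse)
  then show ?thesis
    by (rule double_eq_0_imp_eq_0)
qed

definition leading_term :: "nat \<Rightarrow> nat \<Rightarrow> (nat \<Rightarrow> nat) \<Rightarrow> (nat \<Rightarrow> nat) \<Rightarrow> 'S" where
  "leading_term s m b \<beta> = Q (s - 1) (\<beta> s) (b s) * minor (Suc s) m \<beta> b"

lemma minor_expand_first:
  assumes "s \<le> m"
  shows "alt_sum {s..m} (leading_term s m b) \<alpha> = of_nat (fact (m - s)) * minor s m \<alpha> b"
proof -
  have "leading_term s m b = alt_sum {Suc s..m} (minor_term s m b)"
  proof (rule ext)
    fix \<beta>
    have "leading_term s m b \<beta> = alt_sum {Suc s..m} (\<lambda>\<gamma>. Q (s - 1) (\<beta> s) (b s) * minor_term (Suc s) m b \<gamma>) \<beta>"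
      unfolding leading_term_def minor_def alt_sum_mult_left ..
    also have "\<dots> = alt_sum {Suc s..m} (minor_term s m b) \<beta>"
    proof (rule alt_sum_cong)
      fix \<sigma> assume "\<sigma> permutes {Suc s..m}"
      then have "\<sigma> s = s"
        by (intro permutes_not_in) auto
      then show "Q (s - 1) (\<beta> s) (b s) * minor_term (Suc s) m b (\<beta> \<circ> \<sigma>) = minor_term s m b (\<beta> \<circ> \<sigma>)"
        using minor_term_Cons[OF assms] by simp
    qed
    finally show "leading_term s m b \<beta> = alt_sum {Suc s..m} (minor_term s m b) \<beta>" .
  qed
  then have "alt_sum {s..m} (leading_term s m b) \<alpha> = alt_sum {s..m} (alt_sum {Suc s..m} (minor_term s m b)) \<alpha>"
    by simp
  also have "\<dots> = of_nat (fact (m - s)) * minor s m \<alpha> b"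
    unfolding minor_def by (subst alt_sum_alt_sum) auto
  finally show ?thesis .
qed


text \<open>The induction step in abstract form: \<open>q'\<close> is the first factor \<open>Q (s - 1) (\<beta> s) (b s)\<close> of a
  leading term and \<open>N\<close> the minor on the remaining columns; \<open>Y1\<close> and \<open>Y4\<close> are exchange relations,
  \<open>Y2\<close> and \<open>Y3\<close> the induction hypothesis for \<open>N\<close>.\<close>
lemma commutator_step_identity:
  fixes J :: "nat set"
  assumes Y1: "smul d (comm Pkl q') = smul e (Ps * qk - qsl * Pkbs)"
    and Y2: "smul (d + e) (comm Pkl N) = smul e ((\<Sum>j\<in>J. Pj j * Nj j) - (\<Sum>r\<in>J. Nr r * Pr r))"
    and Y3: "smul (d + e) (comm Pkbs N) = smul e ((\<Sum>j\<in>J. Pjbs j * Nj j) - (\<Sum>r\<in>J. Nrbs r * Pr r))"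
    and Y4: "\<And>j. smul d (comm (Pj j) q') = smul e (Ps * qj j - qsl * Pjbs j)"
  shows "smul d (smul (d + e) (comm Pkl (q' * N))) - smul (d + e) (smul e ((Ps * qk * N - qsl * N * Pkbs)
      + (\<Sum>j\<in>J. Pj j * (q' * Nj j)) - (\<Sum>r\<in>J. q' * Nr r * Pr r)))
    = smul e (smul e ((\<Sum>r\<in>J. (qsl * Nrbs r + q' * Nr r) * Pr r) - (\<Sum>j\<in>J. (Ps * qj j + Pj j * q') * Nj j)))"
    (is "?L = ?R")
proof -
  have "?L - ?R = smul (d + e) ((smul d (comm Pkl q') - smul e (Ps * qk - qsl * Pkbs)) * N)
     + smul d (q' * (smul (d + e) (comm Pkl N) - smul e ((\<Sum>j\<in>J. Pj j * Nj j) - (\<Sum>r\<in>J. Nr r * Pr r))))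
     - smul e (qsl * (smul (d + e) (comm Pkbs N) - smul e ((\<Sum>j\<in>J. Pjbs j * Nj j) - (\<Sum>r\<in>J. Nrbs r * Pr r))))
     - smul e (\<Sum>j\<in>J. (smul d (comm (Pj j) q') - smul e (Ps * qj j - qsl * Pjbs j)) * Nj j)"
    by (simp add: comm_def smul_simps algebra_simps sum_distrib_left sum_distrib_right sum_subtractf sum.distrib)
  also have "\<dots> = 0"
    using Y1 Y2 Y3 Y4 by simp
  finally show ?thesis
    by simp
qed

definition replace_sum ::
    "((nat \<Rightarrow> nat) \<Rightarrow> (nat \<Rightarrow> nat) \<Rightarrow> 'S) \<Rightarrow> nat set \<Rightarrow> nat \<Rightarrow> nat \<Rightarrow> (nat \<Rightarrow> nat) \<Rightarrow> (nat \<Rightarrow> nat) \<Rightarrow> 'S" where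
  "replace_sum F I k l \<alpha> b = (\<Sum>i\<in>I. P (\<alpha> i) l * F (\<alpha>(i := k)) b) - (\<Sum>r\<in>I. F \<alpha> (b(r := l)) * P k (b r))"

lemma leading_term_replace_sum:
  assumes "s \<le> m"
  shows "replace_sum (\<lambda>\<beta> b. leading_term s m b \<beta>) {s..m} k l \<beta> b =
    (P (\<beta> s) l * Q (s - 1) k (b s) * minor (Suc s) m \<beta> b - Q (s - 1) (\<beta> s) l * minor (Suc s) m \<beta> b * P k (b s))
    + (\<Sum>j\<in>{Suc s..m}. P (\<beta> j) l * (Q (s - 1) (\<beta> s) (b s) * minor (Suc s) m (\<beta>(j := k)) b))
    - (\<Sum>r\<in>{Suc s..m}. Q (s - 1) (\<beta> s) (b s) * minor (Suc s) m \<beta> (b(r := l)) * P k (b r))"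
proof -
  have split: "{s..m} = insert s {Suc s..m}" "s \<notin> {Suc s..m}"
    using assms by auto
  have "leading_term s m b (\<beta>(s := k)) = Q (s - 1) k (b s) * minor (Suc s) m \<beta> b"
    "leading_term s m (b(s := l)) \<beta> = Q (s - 1) (\<beta> s) l * minor (Suc s) m \<beta> b"
    unfolding leading_term_def by (auto intro!: arg_cong[where f = "(*) _"] minor_cong)
  moreover have "(\<Sum>j\<in>{Suc s..m}. P (\<beta> j) l * leading_term s m b (\<beta>(j := k))) =
      (\<Sum>j\<in>{Suc s..m}. P (\<beta> j) l * (Q (s - 1) (\<beta> s) (b s) * minor (Suc s) m (\<beta>(j := k)) b))"
    "(\<Sum>r\<in>{Suc s..m}. leading_term s m (b(r := l)) \<beta> * P k (b r)) =
      (\<Sum>r\<in>{Suc s..m}. Q (s - 1) (\<beta> s) (b s) * minor (Suc s) m \<beta> (b(r := l)) * P k (b r))"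
    unfolding leading_term_def by (auto intro!: sum.cong)
  ultimately show ?thesis
    unfolding replace_sum_def split sum.insert[OF finite_atLeastAtMost split(2)] by (simp add: algebra_simps)
qed

lemma alt_sum_comm_leading_term:
  assumes "s \<le> m"
  shows "alt_sum {s..m} (\<lambda>\<beta>. comm x (leading_term s m b \<beta>)) \<alpha> = of_nat (fact (m - s)) * comm x (minor s m \<alpha> b)"
  unfolding comm_def alt_sum_diff alt_sum_mult_left alt_sum_mult_right minor_expand_first[OF assms]
  by (simp add: of_nat_mult_left_commute mult.assoc right_diff_distrib)

lemma alt_sum_leading_term_replace_sum:
  assumes "s \<le> m"
  shows "alt_sum {s..m} (\<lambda>\<beta>. replace_sum (\<lambda>\<beta> b. leading_term s m b \<beta>) {s..m} k l \<beta> b) \<alpha> =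
    of_nat (fact (m - s)) * replace_sum (minor s m) {s..m} k l \<alpha> b"
  unfolding replace_sum_def alt_sum_diff alt_sum_fun_upd[OF finite_atLeastAtMost, where c = "\<lambda>x. P x l"]
  unfolding alt_sum_sum alt_sum_mult_right minor_expand_first[OF assms]
  by (simp add: of_nat_mult_left_commute sum_distrib_left right_diff_distrib mult.assoc)

lemma alt_sum_row_symmetric_eq_0:
  assumes "j \<in> {Suc s..m}"
  shows "alt_sum {s..m} (\<lambda>\<beta>. (P (\<beta> s) l * Q (s - 1) (\<beta> j) c + P (\<beta> j) l * Q (s - 1) (\<beta> s) c)
    * minor (Suc s) m (\<beta>(j := k)) b) \<alpha> = 0"
proof (rule alt_sum_eq_0_if_swap_invariant)
  show "finite {s..m}" "s \<in> {s..m}" "j \<in> {s..m}" "s \<noteq> j"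
    using assms by auto
  fix \<beta>
  have "minor (Suc s) m ((\<beta> \<circ> Transposition.transpose s j)(j := k)) b = minor (Suc s) m (\<beta>(j := k)) b"
    by (rule minor_cong) (auto simp: transpose_def)
  then show "(P ((\<beta> \<circ> Transposition.transpose s j) s) l * Q (s - 1) ((\<beta> \<circ> Transposition.transpose s j) j) c
      + P ((\<beta> \<circ> Transposition.transpose s j) j) l * Q (s - 1) ((\<beta> \<circ> Transposition.transpose s j) s) c)
      * minor (Suc s) m ((\<beta> \<circ> Transposition.transpose s j)(j := k)) b =
    (P (\<beta> s) l * Q (s - 1) (\<beta> j) c + P (\<beta> j) l * Q (s - 1) (\<beta> s) c) * minor (Suc s) m (\<beta>(j := k)) b"
    by (simp add: add.commute)
qed

lemma alt_sum_col_swapped_eq_0: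
  assumes "1 \<le> s" "r \<in> {Suc s..m}"
  shows "alt_sum {s..m} (\<lambda>\<beta>. (Q (s - 1) (\<beta> s) l * minor (Suc s) m \<beta> (b(r := b s))
    + Q (s - 1) (\<beta> s) (b s) * minor (Suc s) m \<beta> (b(r := l))) * x) \<alpha> = 0"
proof -
  define c where "c = b(r := l)"
  let ?\<tau> = "Transposition.transpose s r"
  have r: "s < r" "r \<le> m"
    using assms by auto
  have "Q (s - 1) (\<beta> s) l * minor (Suc s) m \<beta> (b(r := b s)) + Q (s - 1) (\<beta> s) (b s) * minor (Suc s) m \<beta> (b(r := l)) =
      leading_term s m (c \<circ> ?\<tau>) \<beta> + leading_term s m c \<beta>" for \<beta>
  proof -
    have "minor (Suc s) m \<beta> (c \<circ> ?\<tau>) = minor (Suc s) m \<beta> (b(r := b s))"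
      by (rule minor_cong) (use r in \<open>auto simp: transpose_def c_def\<close>)
    then show ?thesis
      unfolding leading_term_def c_def using r by simp
  qed
  then have "alt_sum {s..m} (\<lambda>\<beta>. (Q (s - 1) (\<beta> s) l * minor (Suc s) m \<beta> (b(r := b s))
      + Q (s - 1) (\<beta> s) (b s) * minor (Suc s) m \<beta> (b(r := l))) * x) \<alpha> =
    (alt_sum {s..m} (leading_term s m (c \<circ> ?\<tau>)) \<alpha> + alt_sum {s..m} (leading_term s m c) \<alpha>) * x"
    by (simp add: alt_sum_add alt_sum_mult_right)
  also have "\<dots> = 0"
    using r by (simp add: minor_expand_first minor_swap_cols[OF assms(1)])
  finally show ?thesis .
qed

lemma alt_sum_commutator_defect_eq_0:
  assumes "1 \<le> s" "s \<le> m"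
    and IH: "\<And>k l \<alpha> b. smul (D (int s)) (comm (P k l) (minor (Suc s) m \<alpha> b)) =
      smul e (replace_sum (minor (Suc s) m) {Suc s..m} k l \<alpha> b)"
  defines "d \<equiv> D (int s - 1)"
  shows "alt_sum {s..m} (\<lambda>\<beta>. smul d (smul (d + e) (comm (P k l) (leading_term s m b \<beta>)))
    - smul (d + e) (smul e (replace_sum (\<lambda>\<beta> b. leading_term s m b \<beta>) {s..m} k l \<beta> b))) \<alpha> = 0"
proof -
  have D_s: "D (int s) = d + e"
    using D_plus_1[of "int s - 1"] by (simp add: d_def)
  have exch: "smul d (comm (P i j) (Q (s - 1) i' j')) = smul e (P i' j * Q (s - 1) i j' - Q (s - 1) i' j * P i j')"
    for i j i' j'
    using exchange[of "s - 1"] assms(1) by (simp add: d_def of_nat_diff)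
  define U where "U j \<beta> = (P (\<beta> s) l * Q (s - 1) (\<beta> j) (b s) + P (\<beta> j) l * Q (s - 1) (\<beta> s) (b s))
      * minor (Suc s) m (\<beta>(j := k)) b" for j \<beta>
  define V where "V r \<beta> = (Q (s - 1) (\<beta> s) l * minor (Suc s) m \<beta> (b(r := b s))
      + Q (s - 1) (\<beta> s) (b s) * minor (Suc s) m \<beta> (b(r := l))) * P k (b r)" for r \<beta>
  have "smul d (smul (d + e) (comm (P k l) (leading_term s m b \<beta>)))
      - smul (d + e) (smul e (replace_sum (\<lambda>\<beta> b. leading_term s m b \<beta>) {s..m} k l \<beta> b)) =
    smul e (smul e ((\<Sum>r\<in>{Suc s..m}. V r \<beta>) - (\<Sum>j\<in>{Suc s..m}. U j \<beta>)))" for \<beta>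
    unfolding leading_term_replace_sum[OF assms(2)] leading_term_def[of s m b \<beta>] U_def V_def
    by (rule commutator_step_identity)
      (rule exch, rule IH[unfolded D_s replace_sum_def], rule IH[unfolded D_s replace_sum_def], rule exch)
  moreover have "alt_sum {s..m} (U j) \<alpha> = 0" if "j \<in> {Suc s..m}" for j
    unfolding U_def by (rule alt_sum_row_symmetric_eq_0[OF that])
  moreover have "alt_sum {s..m} (V r) \<alpha> = 0" if "r \<in> {Suc s..m}" for r
    unfolding V_def by (rule alt_sum_col_swapped_eq_0[OF assms(1) that])
  ultimately show ?thesis
    by (simp add: alt_sum_smul alt_sum_diff alt_sum_sum sum.neutral)
qed

lemma minor_commutator_step:
  assumes "1 \<le> s" "s \<le> m"
    and IH: "\<And>k l \<alpha> b. smul (D (int s)) (comm (P k l) (minor (Suc s) m \<alpha> b)) =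
      smul e (replace_sum (minor (Suc s) m) {Suc s..m} k l \<alpha> b)"
  shows "smul (D (int s - 1)) (comm (P k l) (minor s m \<alpha> b)) = smul e (replace_sum (minor s m) {s..m} k l \<alpha> b)"
    (is "?lhs = ?rhs")
proof -
  define d where "d = D (int s - 1)"
  have D_s: "D (int s) = d + e"
    using D_plus_1[of "int s - 1"] by (simp add: d_def)
  have "of_nat (fact (m - s)) * smul (d + e) (?lhs - ?rhs) =
      alt_sum {s..m} (\<lambda>\<beta>. smul d (smul (d + e) (comm (P k l) (leading_term s m b \<beta>)))
        - smul (d + e) (smul e (replace_sum (\<lambda>\<beta> b. leading_term s m b \<beta>) {s..m} k l \<beta> b))) \<alpha>"
    unfolding alt_sum_diff alt_sum_smul alt_sum_comm_leading_term[OF assms(2)]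
      alt_sum_leading_term_replace_sum[OF assms(2)]
    by (simp add: smul_simps right_diff_distrib distrib_left mult.commute d_def)
  also have "\<dots> = 0"
    unfolding d_def using assms by (rule alt_sum_commutator_defect_eq_0)
  finally have "smul (D (int s)) (?lhs - ?rhs) = 0"
    using of_nat_mult_cancel[of "fact (m - s)"] by (simp add: D_s)
  then have "?lhs - ?rhs = 0"
    by (rule smul_D_cancel)
  then show ?thesis
    by simp
qed

lemma minor_commutator:
  assumes "1 \<le> s" "s \<le> Suc m"
  shows "smul (D (int s - 1)) (comm (P k l) (minor s m \<alpha> b)) = smul e (replace_sum (minor s m) {s..m} k l \<alpha> b)"
  using assms
proof (induction "Suc m - s" arbitrary: s k l \<alpha> b)
  case 0
  then have "s = Suc m"
    by simp
  then show ?case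
    by (simp add: minor_Suc_empty comm_def replace_sum_def)
next
  case (Suc d)
  show ?case
  proof (rule minor_commutator_step)
    show "1 \<le> s" "s \<le> m"
      using Suc by auto
    show "smul (D (int s)) (comm (P k l) (minor (Suc s) m \<alpha> b)) =
        smul e (replace_sum (minor (Suc s) m) {Suc s..m} k l \<alpha> b)" for k l \<alpha> b
      using Suc.hyps(1)[of "Suc s" k l \<alpha> b] Suc.hyps(2) Suc.prems by simp
  qed
qed

lemma sum_row_replaced_minor:
  assumes "p \<in> {s..m}"
  shows "(\<Sum>i\<in>{s..m}. P (\<alpha> i) l * minor s m (\<alpha>(i := \<alpha> p)) b) = P (\<alpha> p) l * minor s m \<alpha> b"
proof -
  have "(\<Sum>i\<in>{s..m}. P (\<alpha> i) l * minor s m (\<alpha>(i := \<alpha> p)) b) =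
      (\<Sum>i\<in>{s..m}. if i = p then P (\<alpha> p) l * minor s m \<alpha> b else 0)"
  proof (rule sum.cong[OF refl])
    fix i assume "i \<in> {s..m}"
    then show "P (\<alpha> i) l * minor s m (\<alpha>(i := \<alpha> p)) b = (if i = p then P (\<alpha> p) l * minor s m \<alpha> b else 0)"
      using minor_eq_0_if_rows_eq[of i s m p "\<alpha>(i := \<alpha> p)"] assms by auto
  qed
  then show ?thesis
    using assms by simp
qed

lemma sum_col_replaced_minor:
  assumes "1 \<le> s" "q \<in> {s..m}"
  shows "(\<Sum>r\<in>{s..m}. minor s m \<alpha> (b(r := b q)) * P k (b r)) = minor s m \<alpha> b * P k (b q)"
proof -
  have "(\<Sum>r\<in>{s..m}. minor s m \<alpha> (b(r := b q)) * P k (b r)) =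
      (\<Sum>r\<in>{s..m}. if r = q then minor s m \<alpha> b * P k (b q) else 0)"
  proof (rule sum.cong[OF refl])
    fix r assume "r \<in> {s..m}"
    then show "minor s m \<alpha> (b(r := b q)) * P k (b r) = (if r = q then minor s m \<alpha> b * P k (b q) else 0)"
      using minor_eq_0_if_cols_eq[OF assms(1), of r m q "b(r := b q)"] assms by auto
  qed
  then show ?thesis
    using assms by simp
qed

text \<open>For \<open>s = 1\<close> the two sums collapse to \<open>e\<close> times the commutator itself, so \<open>D 0 - e = D (-1)\<close>
  annihilates it.\<close>
theorem minor_commutes_entry:
  assumes "p \<in> {1..m}" "q \<in> {1..m}"
  shows "comm (P (\<alpha> p) (b q)) (minor 1 m \<alpha> b) = 0"
proof -
  have "smul (D 0) (comm (P (\<alpha> p) (b q)) (minor 1 m \<alpha> b)) = smul e (comm (P (\<alpha> p) (b q)) (minor 1 m \<alpha> b))"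
    using minor_commutator[of 1 m "\<alpha> p" "b q" \<alpha> b]
    unfolding replace_sum_def sum_row_replaced_minor[OF assms(1)] sum_col_replaced_minor[OF order.refl assms(2)]
    by (simp add: comm_def)
  moreover have "D 0 = D (-1) + e"
    using D_plus_1[of "-1"] by simp
  ultimately have "smul (D (-1)) (comm (P (\<alpha> p) (b q)) (minor 1 m \<alpha> b)) = 0"
    by (simp add: smul_add_left)
  then show ?thesis
    by (rule smul_D_cancel)
qed

end

section \<open>Substitution and diagonal of formal power series\<close>

definition fps_map :: "('a \<Rightarrow> 'b) \<Rightarrow> 'a fps \<Rightarrow> 'b fps" where
  "fps_map h F = Abs_fps (\<lambda>n. h (F $ n))"

lemma fps_map_nth [simp]: "fps_map h F $ n = h (F $ n)"
  unfolding fps_map_def by simp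

lemma fps_map_id: "fps_map (\<lambda>x. x) F = F"
  by (simp add: fps_eq_iff)

context ring_1_hom
begin

lemma ring_1_hom_fps_map: "ring_1_hom (fps_map h)"
proof
  show "fps_map h (x + y) = fps_map h x + fps_map h y" for x y
    by (simp add: fps_eq_iff hom_add)
  show "fps_map h (x * y) = fps_map h x * fps_map h y" for x y
    by (simp add: fps_eq_iff fps_mult_nth hom_sum hom_mult)
  show "fps_map h 1 = 1"
    by (simp add: fps_eq_iff hom_one)
qed

lemma fps_map_const: "fps_map h (fps_const a) = fps_const (h a)"
  by (simp add: fps_eq_iff)

lemma fps_map_X: "fps_map h fps_X = fps_X"
  by (simp add: fps_eq_iff hom_one)

end

lemma fps_mult_commute_if_central:
  fixes F :: "'a::ring_1 fps"
  assumes "\<And>i y. F $ i * y = y * F $ i"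
  shows "F * G = G * F"
proof (rule fps_ext)
  fix n
  have "(G * F) $ n = (\<Sum>i=0..n. G $ (n + 0 - i) * F $ (n - (n + 0 - i)))"
    unfolding fps_mult_nth by (rule sum.atLeastAtMost_rev)
  also have "\<dots> = (\<Sum>i=0..n. F $ i * G $ (n - i))"
    by (rule sum.cong[OF refl]) (auto simp: assms)
  finally show "(F * G) $ n = (G * F) $ n"
    by (simp add: fps_mult_nth)
qed

lemma sum_triangle_eq_sum_square:
  fixes f :: "nat \<Rightarrow> nat \<Rightarrow> 'a::comm_monoid_add"
  assumes "\<And>i j. N < i + j \<Longrightarrow> f i j = 0"
  shows "(\<Sum>s=0..N. \<Sum>i=0..s. f i (s - i)) = (\<Sum>i=0..N. \<Sum>j=0..N. f i j)"
proof -
  have "(\<Sum>i=0..N. \<Sum>j=0..N. f i j) = (\<Sum>(i, j)\<in>{0..N} \<times> {0..N}. f i j)"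
    by (simp add: sum.cartesian_product)
  also have "\<dots> = (\<Sum>(i, j)\<in>{(i, j). i + j \<le> N}. f i j)"
    by (rule sum.mono_neutral_right) (auto, metis assms not_le)
  also have "\<dots> = (\<Sum>k\<le>N. \<Sum>i\<le>k. f i (k - i))"
    by (rule sum.triangle_reindex_eq)
  finally show ?thesis
    by (simp add: atLeast0AtMost)
qed

lemma fps_mult_eq_0_cancel_left:
  fixes f F :: "'a::ring_1 fps"
  assumes "\<And>x. f $ 0 * x = 0 \<Longrightarrow> x = 0" and "f * F = 0"
  shows "F = 0"
proof -
  have "F $ n = 0" for n
  proof (induction n rule: less_induct)
    case (less n)
    have "(f * F) $ n = f $ 0 * F $ n + (\<Sum>i=1..n. f $ i * F $ (n - i))"
      unfolding fps_mult_nth by (simp add: sum.atLeast_Suc_atMost)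
    also have "(\<Sum>i=1..n. f $ i * F $ (n - i)) = 0"
      by (rule sum.neutral) (auto simp: less)
    finally have "f $ 0 * F $ n = 0"
      using assms(2) by simp
    then show ?case
      by (rule assms(1))
  qed
  then show ?thesis
    by (simp add: fps_eq_iff)
qed

lemma fps_mult_eq_0_cancel_order_one:
  fixes f F :: "'a::ring_1 fps"
  assumes "f $ 0 = 0" "f $ 1 = 1" "f * F = 0"
  shows "F = 0"
proof -
  define g where "g = Abs_fps (\<lambda>n. f $ Suc n)"
  have "f = fps_X * g"
    unfolding g_def by (rule fps_ext) (simp add: assms(1))
  then have "fps_X * (g * F) = 0"
    using assms(3) by (simp add: mult.assoc)
  then have "g * F = 0"
    by (simp add: fps_eq_iff) (metis fps_X_mult_nth nat.distinct(1) diff_Suc_1)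
  moreover have "g $ 0 = 1"
    unfolding g_def using assms(2) by simp
  ultimately show ?thesis
    using fps_mult_eq_0_cancel_left[of g F] by simp
qed

definition fps_subst :: "('c::comm_ring_1 \<Rightarrow> 'b::ring_1) \<Rightarrow> 'c fps \<Rightarrow> 'b fps \<Rightarrow> 'b fps" where
  "fps_subst em g F = Abs_fps (\<lambda>N. \<Sum>s=0..N. em ((g ^ s) $ N) * F $ s)"

lemma fps_subst_nth: "fps_subst em g F $ N = (\<Sum>s=0..N. em ((g ^ s) $ N) * F $ s)"
  unfolding fps_subst_def by simp

lemma fps_subst_natural:
  assumes "ring_1_hom h" "\<And>z. h (em z) = em' z"
  shows "fps_map h (fps_subst em g F) = fps_subst em' g (fps_map h F)"
  using assms by (simp add: fps_eq_iff fps_subst_nth ring_1_hom.hom_sum ring_1_hom.hom_mult)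

locale fps_subst_setting = ring_1_hom em for em :: "'c::comm_ring_1 \<Rightarrow> 'b::ring_1" +
  fixes g :: "'c fps"
  assumes em_central: "em z * y = y * em z"
    and g_0: "g $ 0 = 0"
begin

lemma power_nth_eq_0: "N < s \<Longrightarrow> (g ^ s) $ N = 0"
  using startsby_zero_power_prefix[OF g_0, of s] by simp

lemma fps_subst_nth_upto:
  assumes "N \<le> M"
  shows "fps_subst em g F $ N = (\<Sum>s=0..M. em ((g ^ s) $ N) * F $ s)"
  unfolding fps_subst_nth by (rule sum.mono_neutral_left) (use assms power_nth_eq_0 in auto)

lemma fps_subst_add: "fps_subst em g (F + G) = fps_subst em g F + fps_subst em g G"
  by (simp add: fps_eq_iff fps_subst_nth distrib_left sum.distrib)

lemma fps_subst_const: "fps_subst em g (fps_const b) = fps_const b"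
proof (rule fps_ext)
  fix N
  have "fps_subst em g (fps_const b) $ N = (\<Sum>s\<in>{0}. em ((g ^ s) $ N) * fps_const b $ s)"
    unfolding fps_subst_nth by (rule sum.mono_neutral_right) auto
  then show "fps_subst em g (fps_const b) $ N = fps_const b $ N"
    by (simp add: hom_one)
qed

lemma fps_subst_X: "fps_subst em g fps_X = fps_map em g"
proof (rule fps_ext)
  fix N
  show "fps_subst em g fps_X $ N = fps_map em g $ N"
  proof (cases "N = 0")
    case True
    then show ?thesis by (simp add: fps_subst_nth g_0)
  next
    case False
    have "fps_subst em g fps_X $ N = (\<Sum>s\<in>{1}. em ((g ^ s) $ N) * fps_X $ s)"
      unfolding fps_subst_nth by (rule sum.mono_neutral_right) (use False in auto)
    then show ?thesis by simp
  qed
qed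

lemma fps_subst_mult: "fps_subst em g (F * G) = fps_subst em g F * fps_subst em g G"
proof (rule fps_ext)
  fix N
  define c where "c p n = em ((g ^ p) $ n)" for p n
  have c_central: "c p n * y = y * c p n" for p n y
    unfolding c_def by (rule em_central)
  have "fps_subst em g (F * G) $ N = (\<Sum>s=0..N. \<Sum>i=0..s. c (i + (s - i)) N * (F $ i * G $ (s - i)))"
    unfolding fps_subst_nth fps_mult_nth c_def by (simp add: sum_distrib_left)
  also have "\<dots> = (\<Sum>p=0..N. \<Sum>q=0..N. c (p + q) N * (F $ p * G $ q))"
    by (rule sum_triangle_eq_sum_square) (simp add: c_def power_nth_eq_0)
  finally have lhs: "fps_subst em g (F * G) $ N = (\<Sum>p=0..N. \<Sum>q=0..N. c (p + q) N * (F $ p * G $ q))" .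
  have "(fps_subst em g F * fps_subst em g G) $ N =
      (\<Sum>k=0..N. (\<Sum>p=0..N. c p k * F $ p) * (\<Sum>q=0..N. c q (N - k) * G $ q))"
    unfolding fps_mult_nth c_def by (intro sum.cong refl arg_cong2[where f = "(*)"] fps_subst_nth_upto) auto
  also have "\<dots> = (\<Sum>k=0..N. \<Sum>p=0..N. \<Sum>q=0..N. (c p k * c q (N - k)) * (F $ p * G $ q))"
    unfolding sum_product by (intro sum.cong refl) (metis c_central mult.assoc)
  also have "\<dots> = (\<Sum>p=0..N. \<Sum>q=0..N. (\<Sum>k=0..N. c p k * c q (N - k)) * (F $ p * G $ q))"
    by (subst sum.swap, rule sum.cong[OF refl], subst sum.swap) (simp add: sum_distrib_right)
  also have "\<dots> = (\<Sum>p=0..N. \<Sum>q=0..N. c (p + q) N * (F $ p * G $ q))"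
    unfolding c_def power_add by (simp only: fps_mult_nth hom_sum hom_mult)
  finally show "fps_subst em g (F * G) $ N = (fps_subst em g F * fps_subst em g G) $ N"
    using lhs by simp
qed

lemma ring_1_hom_fps_subst: "ring_1_hom (fps_subst em g)"
  by unfold_locales (simp_all add: fps_subst_add fps_subst_mult fps_subst_const flip: fps_const_1_eq_1)

end

definition fps_diag :: "'b::ring_1 fps fps \<Rightarrow> 'b fps" where
  "fps_diag F = Abs_fps (\<lambda>n. \<Sum>i=0..n. (F $ i) $ (n - i))"

lemma fps_diag_nth: "fps_diag F $ n = (\<Sum>i=0..n. (F $ i) $ (n - i))"
  unfolding fps_diag_def by simp

lemma fps_diag_add: "fps_diag (F + G) = fps_diag F + fps_diag G"
  by (simp add: fps_eq_iff fps_diag_nth sum.distrib)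

lemma fps_diag_const: "fps_diag (fps_const G) = G"
proof (rule fps_ext)
  fix n
  have "fps_diag (fps_const G) $ n = (\<Sum>i\<in>{0}. (fps_const G $ i) $ (n - i))"
    unfolding fps_diag_nth by (rule sum.mono_neutral_right) auto
  then show "fps_diag (fps_const G) $ n = G $ n"
    by simp
qed

lemma fps_diag_map_const: "fps_diag (fps_map fps_const G) = G"
proof (rule fps_ext)
  fix n
  have "fps_diag (fps_map fps_const G) $ n = (\<Sum>i\<in>{n}. (fps_map fps_const G $ i) $ (n - i))"
    unfolding fps_diag_nth by (rule sum.mono_neutral_right) auto
  then show "fps_diag (fps_map fps_const G) $ n = G $ n"
    by simp
qed

lemma fps_diag_X: "fps_diag (fps_X :: 'b::ring_1 fps fps) = fps_X"
proof -
  have "fps_map fps_const (fps_X :: 'b fps) = fps_X"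
    by (rule ring_1_hom.fps_map_X[OF ring_1_hom_fps_const])
  then show ?thesis
    using fps_diag_map_const[of "fps_X :: 'b fps"] by simp
qed

lemma fps_diag_map_map: "ring_1_hom h \<Longrightarrow> fps_diag (fps_map (fps_map h) F) = fps_map h (fps_diag F)"
  by (simp add: fps_eq_iff fps_diag_nth ring_1_hom.hom_sum)

lemma fps_diag_mult_nth:
  "fps_diag (F * G) $ n =
    (\<Sum>a=0..n. \<Sum>c=0..n. \<Sum>b=0..n. if a + b + c \<le> n then F $ a $ b * G $ c $ (n - a - b - c) else 0)"
proof -
  define f where "f a c = (if a + c \<le> n then (F $ a * G $ c) $ (n - (a + c)) else 0)" for a c
  have "fps_diag (F * G) $ n = (\<Sum>i=0..n. \<Sum>a=0..i. f a (i - a))"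
    unfolding fps_diag_nth fps_mult_nth[of F G] fps_sum_nth f_def by (intro sum.cong refl) auto
  also have "\<dots> = (\<Sum>a=0..n. \<Sum>c=0..n. f a c)"
    by (rule sum_triangle_eq_sum_square) (simp add: f_def)
  also have "\<dots> = (\<Sum>a=0..n. \<Sum>c=0..n. \<Sum>b=0..n. if a + b + c \<le> n then F $ a $ b * G $ c $ (n - a - b - c) else 0)"
  proof (intro sum.cong refl)
    fix a c
    show "f a c = (\<Sum>b=0..n. if a + b + c \<le> n then F $ a $ b * G $ c $ (n - a - b - c) else 0)"
    proof (cases "a + c \<le> n")
      case True
      then have "f a c = (\<Sum>b=0..n - (a + c). if a + b + c \<le> n then F $ a $ b * G $ c $ (n - a - b - c) else 0)"
        unfolding f_def fps_mult_nth by (auto intro!: sum.cong simp: algebra_simps)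
      also have "\<dots> = (\<Sum>b=0..n. if a + b + c \<le> n then F $ a $ b * G $ c $ (n - a - b - c) else 0)"
        by (rule sum.mono_neutral_left) auto
      finally show ?thesis .
    qed (auto simp: f_def)
  qed
  finally show ?thesis .
qed

lemma fps_mult_diag_nth:
  "(fps_diag F * fps_diag G) $ n =
    (\<Sum>a=0..n. \<Sum>c=0..n. \<Sum>b=0..n. if a + b + c \<le> n then F $ a $ b * G $ c $ (n - a - b - c) else 0)"
proof -
  define h where "h a b = (if a + b \<le> n then F $ a $ b * fps_diag G $ (n - (a + b)) else 0)" for a b
  have "(fps_diag F * fps_diag G) $ n = (\<Sum>k=0..n. \<Sum>a=0..k. h a (k - a))"
    unfolding fps_mult_nth[of "fps_diag F"] fps_diag_nth[of F] sum_distrib_right h_def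
    by (intro sum.cong refl) auto
  also have "\<dots> = (\<Sum>a=0..n. \<Sum>b=0..n. h a b)"
    by (rule sum_triangle_eq_sum_square) (simp add: h_def)
  also have "\<dots> = (\<Sum>a=0..n. \<Sum>b=0..n. \<Sum>c=0..n. if a + b + c \<le> n then F $ a $ b * G $ c $ (n - a - b - c) else 0)"
  proof (intro sum.cong refl)
    fix a b
    show "h a b = (\<Sum>c=0..n. if a + b + c \<le> n then F $ a $ b * G $ c $ (n - a - b - c) else 0)"
    proof (cases "a + b \<le> n")
      case True
      then have "h a b = (\<Sum>c=0..n - (a + b). if a + b + c \<le> n then F $ a $ b * G $ c $ (n - a - b - c) else 0)"
        unfolding h_def fps_diag_nth sum_distrib_left by (auto intro!: sum.cong simp: algebra_simps)
      also have "\<dots> = (\<Sum>c=0..n. if a + b + c \<le> n then F $ a $ b * G $ c $ (n - a - b - c) else 0)"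
        by (rule sum.mono_neutral_left) auto
      finally show ?thesis .
    qed (auto simp: h_def)
  qed
  also have "\<dots> = (\<Sum>a=0..n. \<Sum>c=0..n. \<Sum>b=0..n. if a + b + c \<le> n then F $ a $ b * G $ c $ (n - a - b - c) else 0)"
    by (rule sum.cong[OF refl], rule sum.swap)
  finally show ?thesis .
qed

lemma ring_1_hom_fps_diag: "ring_1_hom fps_diag"
proof
  show "fps_diag (F + G) = fps_diag F + fps_diag G" for F G :: "'a fps fps"
    by (rule fps_diag_add)
  show "fps_diag (F * G) = fps_diag F * fps_diag G" for F G :: "'a fps fps"
    by (simp add: fps_eq_iff fps_diag_mult_nth fps_mult_diag_nth)
  show "fps_diag 1 = (1 :: 'a fps)"
    using fps_diag_const[of "1 :: 'a fps"] by simp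
qed

definition weak_compositions :: "nat \<Rightarrow> nat \<Rightarrow> (nat \<Rightarrow> nat) set" where
  "weak_compositions m N = {Ns \<in> {1..m} \<rightarrow>\<^sub>E {0..N}. sum Ns {1..m} = N}"

lemma finite_weak_compositions: "finite (weak_compositions m N)"
  by (simp add: weak_compositions_def finite_PiE)

lemma sum_weak_compositions_Suc:
  "(\<Sum>Ns\<in>weak_compositions (Suc m) N. H Ns) =
    (\<Sum>y=0..N. \<Sum>Ns\<in>weak_compositions m (N - y). H (Ns(Suc m := y)))"
proof -
  have "(\<Sum>Ns\<in>weak_compositions (Suc m) N. H Ns) =
      (\<Sum>(y, Ns)\<in>Sigma {0..N} (\<lambda>y. weak_compositions m (N - y)). H (Ns(Suc m := y)))"
  proof (rule sum.reindex_bij_witness[where i = "\<lambda>(y, Ns). Ns(Suc m := y)"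
        and j = "\<lambda>Ns. (Ns (Suc m), Ns(Suc m := undefined))"])
    fix Ns assume "Ns \<in> weak_compositions (Suc m) N"
    then have Ns: "Ns \<in> {1..Suc m} \<rightarrow>\<^sub>E {0..N}" "sum Ns {1..m} + Ns (Suc m) = N"
      by (simp_all add: weak_compositions_def)
    have "Ns k \<le> N - Ns (Suc m)" if "k \<in> {1..m}" for k
      using member_le_sum[OF that, of Ns] Ns(2) by simp
    moreover have "sum (Ns(Suc m := undefined)) {1..m} = sum Ns {1..m}"
      by (rule sum.cong) auto
    ultimately show "(Ns (Suc m), Ns(Suc m := undefined)) \<in> Sigma {0..N} (\<lambda>y. weak_compositions m (N - y))"
      using Ns by (auto simp: weak_compositions_def PiE_iff extensional_def)
    show "(case (Ns (Suc m), Ns(Suc m := undefined)) of (y, Ns) \<Rightarrow> Ns(Suc m := y)) = Ns"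
      "(case (Ns (Suc m), Ns(Suc m := undefined)) of (y, Ns) \<Rightarrow> H (Ns(Suc m := y))) = H Ns"
      by simp_all
  next
    fix p assume "p \<in> Sigma {0..N} (\<lambda>y. weak_compositions m (N - y))"
    then obtain y Ns where p: "p = (y, Ns)" "y \<le> N" "Ns \<in> {1..m} \<rightarrow>\<^sub>E {0..N - y}" "sum Ns {1..m} = N - y"
      by (auto simp: weak_compositions_def)
    have "Ns k \<le> N" if "k \<in> {1..m}" for k
      using PiE_mem[OF p(3) that] by simp
    then have "Ns(Suc m := y) \<in> {1..Suc m} \<rightarrow>\<^sub>E {0..N}"
      using p(2,3) by (auto simp: PiE_iff extensional_def le_Suc_eq)
    moreover have "sum (Ns(Suc m := y)) {1..m} = sum Ns {1..m}"
      by (rule sum.cong) auto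
    ultimately show "(case p of (y, Ns) \<Rightarrow> Ns(Suc m := y)) \<in> weak_compositions (Suc m) N"
      using p(1,2,4) by (simp add: weak_compositions_def)
    show "(case (case p of (y, Ns) \<Rightarrow> Ns(Suc m := y)) of Ns \<Rightarrow> (Ns (Suc m), Ns(Suc m := undefined))) = p"
      using p by (auto simp: PiE_iff fun_eq_iff extensional_def)
  qed
  then show ?thesis
    by (subst sum.Sigma) (auto simp: finite_weak_compositions)
qed

lemma fps_prod_list_nth:
  fixes F :: "nat \<Rightarrow> 'a::ring_1 fps"
  shows "prod_list (map F [1..<Suc m]) $ N =
    (\<Sum>Ns\<in>weak_compositions m N. prod_list (map (\<lambda>k. F k $ Ns k) [1..<Suc m]))"
proof (induction m arbitrary: N)
  case 0
  then show ?case
    by (cases N) (auto simp: weak_compositions_def)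
next
  case (Suc m)
  define A where "A = prod_list (map F [1..<Suc m])"
  have upt: "[1..<Suc (Suc m)] = [1..<Suc m] @ [Suc m]"
    by simp
  have "prod_list (map F [1..<Suc (Suc m)]) $ N = (A * F (Suc m)) $ N"
    unfolding A_def upt by simp
  also have "\<dots> = (\<Sum>y=0..N. A $ (N + 0 - y) * F (Suc m) $ (N - (N + 0 - y)))"
    unfolding fps_mult_nth by (rule sum.atLeastAtMost_rev)
  also have "\<dots> = (\<Sum>y=0..N. \<Sum>Ns\<in>weak_compositions m (N - y).
      prod_list (map (\<lambda>k. F k $ (Ns(Suc m := y)) k) [1..<Suc (Suc m)]))"
  proof (intro sum.cong refl)
    fix y assume "y \<in> {0..N}"
    have same: "map (\<lambda>k. F k $ (Ns(Suc m := y)) k) [1..<Suc m] = map (\<lambda>k. F k $ Ns k) [1..<Suc m]"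
      for Ns :: "nat \<Rightarrow> nat"
      by (rule map_cong) auto
    have prod_upd: "prod_list (map (\<lambda>k. F k $ (Ns(Suc m := y)) k) [1..<Suc (Suc m)]) =
        prod_list (map (\<lambda>k. F k $ Ns k) [1..<Suc m]) * F (Suc m) $ y" for Ns :: "nat \<Rightarrow> nat"
      unfolding upt map_append prod_list.append same by (simp del: upt_Suc)
    show "A $ (N + 0 - y) * F (Suc m) $ (N - (N + 0 - y)) =
        (\<Sum>Ns\<in>weak_compositions m (N - y). prod_list (map (\<lambda>k. F k $ (Ns(Suc m := y)) k) [1..<Suc (Suc m)]))"
      unfolding A_def Suc.IH sum_distrib_right prod_upd using \<open>y \<in> {0..N}\<close> by simp
  qed
  also have "\<dots> = (\<Sum>Ns\<in>weak_compositions (Suc m) N. prod_list (map (\<lambda>k. F k $ Ns k) [1..<Suc (Suc m)]))"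
    by (rule sum_weak_compositions_Suc[symmetric])
  finally show ?case .
qed

section \<open>The series phi_c\<close>

text \<open>\<open>inv_phi \<beta> c\<close> is \<open>1 / phi_c(u)\<close> as a power series in \<open>u\<^sup>-\<^sup>1\<close>: the recursion solves
  \<open>x (1 + \<beta> psi\<^sup>2) = psi (1 + c x + \<beta> x\<^sup>2)\<close> coefficientwise.\<close>
function inv_phi_coeff :: "complex \<Rightarrow> complex \<Rightarrow> nat \<Rightarrow> complex" where
  "inv_phi_coeff \<beta> c N = (if N = 0 then 0 else
     (if N = 1 then 1 else 0) + \<beta> * (\<Sum>i\<in>{0..N-1}. inv_phi_coeff \<beta> c i * inv_phi_coeff \<beta> c (N - 1 - i))
     - c * inv_phi_coeff \<beta> c (N - 1) - (if 2 \<le> N then \<beta> * inv_phi_coeff \<beta> c (N - 2) else 0))"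
  by pat_completeness auto
termination
  by (relation "measure (\<lambda>(\<beta>, c, N). N)") auto

declare inv_phi_coeff.simps [simp del]

definition inv_phi :: "complex \<Rightarrow> complex \<Rightarrow> complex fps" where
  "inv_phi \<beta> c = Abs_fps (inv_phi_coeff \<beta> c)"

lemma inv_phi_nth_0: "inv_phi \<beta> c $ 0 = 0"
  unfolding inv_phi_def by (simp add: inv_phi_coeff.simps)

lemma inv_phi_nth_1: "inv_phi \<beta> c $ 1 = 1"
  unfolding inv_phi_def by (simp add: inv_phi_coeff.simps[of \<beta> c "Suc 0"] inv_phi_coeff.simps[of \<beta> c 0])

lemma inv_phi_equation:
  "fps_X * (1 + fps_const \<beta> * inv_phi \<beta> c ^ 2) = inv_phi \<beta> c * (1 + fps_const c * fps_X + fps_const \<beta> * fps_X ^ 2)"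
proof (rule fps_ext)
  fix N
  let ?p = "inv_phi \<beta> c"
  show "(fps_X * (1 + fps_const \<beta> * ?p ^ 2)) $ N = (?p * (1 + fps_const c * fps_X + fps_const \<beta> * fps_X ^ 2)) $ N"
  proof (cases N)
    case 0
    then show ?thesis by (simp add: inv_phi_nth_0)
  next
    case (Suc M)
    have coeff: "?p $ n = inv_phi_coeff \<beta> c n" for n
      unfolding inv_phi_def by simp
    have "(fps_X * (1 + fps_const \<beta> * ?p ^ 2)) $ N = (if M = 0 then 1 else 0) + \<beta> * (\<Sum>i=0..M. ?p $ i * ?p $ (M - i))"
      using Suc by (simp add: power2_eq_square fps_mult_nth[of ?p ?p])
    moreover have "?p * (1 + fps_const c * fps_X + fps_const \<beta> * fps_X ^ 2) =
        ?p + fps_const c * (fps_X * ?p) + fps_const \<beta> * (fps_X * (fps_X * ?p))"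
      by (simp add: algebra_simps power2_eq_square)
    then have "(?p * (1 + fps_const c * fps_X + fps_const \<beta> * fps_X ^ 2)) $ N =
        ?p $ N + c * ?p $ M + (if 1 \<le> M then \<beta> * ?p $ (M - 1) else 0)"
      using Suc by (simp add: fps_X_mult_nth)
    moreover have "?p $ N = (if N = 1 then 1 else 0) + \<beta> * (\<Sum>i\<in>{0..N-1}. ?p $ i * ?p $ (N - 1 - i))
        - c * ?p $ (N - 1) - (if 2 \<le> N then \<beta> * ?p $ (N - 2) else 0)"
      unfolding coeff using Suc by (subst inv_phi_coeff.simps) simp
    ultimately show ?thesis
      using Suc by (auto simp: algebra_simps)
  qed
qed

lemma fls_X_times_X_inv: "fls_X * fls_X_inv = (1 :: 'a::field fls)"
  by (metis fls_X_nonzero fls_inverse_X right_inverse)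

lemma fls_X_inv_times_X: "fls_X_inv * fls_X = (1 :: 'a::field fls)"
  by (simp add: mult.commute fls_X_times_X_inv)

lemma fls_X_times_X_inv_plus_fps:
  "fls_X * (fls_X_inv + fps_to_fls g) = fps_to_fls (1 + fps_X * (g :: 'a::field fps))"
  by (simp add: distrib_left fls_X_times_X_inv fls_times_fps_to_fls)

lemma fls_X_inv_plus_fps_neq_0: "fls_X_inv + fps_to_fls g \<noteq> (0 :: 'a::field fls)"
proof
  assume "fls_X_inv + fps_to_fls g = 0"
  then have "fps_to_fls (1 + fps_X * g) = 0"
    by (metis fls_X_times_X_inv_plus_fps mult_zero_right)
  then have "(1 + fps_X * g) $ 0 = 0"
    by (simp only: fps_to_fls_eq_0_iff) simp
  then show False
    by simp
qed

lemma quadratic_if_plus_divide_eq: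
  fixes \<phi> b w :: "'a::field"
  assumes "\<phi> \<noteq> 0" "\<phi> + b / \<phi> = w"
  shows "\<phi> * \<phi> - w * \<phi> + b = 0"
proof -
  have "(\<phi> + b / \<phi>) * \<phi> = \<phi> * \<phi> + b"
    using assms(1) by (simp add: distrib_right)
  then show ?thesis
    using assms(2) by simp
qed

lemma phi_equation_unique:
  fixes \<phi>1 \<phi>2 :: "complex fls" and \<beta> c :: complex
  defines "w \<equiv> fls_X_inv + fls_const \<beta> * fls_X + fls_const c"
  assumes g1: "\<phi>1 = fls_X_inv + fps_to_fls g1" and e1: "\<phi>1 + fls_const \<beta> / \<phi>1 = w"
    and g2: "\<phi>2 = fls_X_inv + fps_to_fls g2" and e2: "\<phi>2 + fls_const \<beta> / \<phi>2 = w"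
  shows "\<phi>1 = \<phi>2"
proof -
  have "\<phi>1 \<noteq> 0" "\<phi>2 \<noteq> 0"
    unfolding g1 g2 by (rule fls_X_inv_plus_fps_neq_0)+
  then have q1: "\<phi>1 * \<phi>1 - w * \<phi>1 + fls_const \<beta> = 0" and q2: "\<phi>2 * \<phi>2 - w * \<phi>2 + fls_const \<beta> = 0"
    using e1 e2 quadratic_if_plus_divide_eq by blast+
  have "(\<phi>1 - \<phi>2) * (\<phi>1 + \<phi>2 - w) = (\<phi>1 * \<phi>1 - w * \<phi>1 + fls_const \<beta>) - (\<phi>2 * \<phi>2 - w * \<phi>2 + fls_const \<beta>)"
    by (simp add: algebra_simps)
  then have "(\<phi>1 - \<phi>2) * (\<phi>1 + \<phi>2 - w) = 0"
    using q1 q2 by simp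
  moreover have "\<phi>1 + \<phi>2 \<noteq> w"
  proof
    assume sum: "\<phi>1 + \<phi>2 = w"
    have "\<phi>1 * \<phi>1 - w * \<phi>1 + fls_const \<beta> = fls_const \<beta> - \<phi>1 * \<phi>2"
      unfolding sum[symmetric] by (simp add: algebra_simps)
    then have "fls_const \<beta> = \<phi>1 * \<phi>2"
      using q1 by simp
    then have "fls_X * fls_X * fls_const \<beta> = (fls_X * \<phi>1) * (fls_X * \<phi>2)"
      by (simp add: algebra_simps)
    then have "fps_to_fls (fps_X * fps_X * fps_const \<beta>) = fps_to_fls ((1 + fps_X * g1) * (1 + fps_X * g2))"
      unfolding g1 g2 fls_X_times_X_inv_plus_fps by (simp add: fls_times_fps_to_fls)
    then have "(fps_X * fps_X * fps_const \<beta>) $ 0 = ((1 + fps_X * g1) * (1 + fps_X * g2)) $ 0"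
      by simp
    then show False
      by simp
  qed
  ultimately show ?thesis
    by simp
qed

lemma inverse_inv_phi_eq: "\<exists>g. inverse (fps_to_fls (inv_phi \<beta> c)) = fls_X_inv + fps_to_fls g"
proof -
  let ?p = "inv_phi \<beta> c"
  define u where "u = Abs_fps (\<lambda>n. ?p $ Suc n)"
  have pu: "?p = fps_X * u"
    unfolding u_def by (rule fps_ext) (simp add: inv_phi_nth_0)
  have u0: "u $ 0 = 1"
    unfolding u_def using inv_phi_nth_1 by simp
  define g where "g = Abs_fps (\<lambda>n. inverse u $ Suc n)"
  have "inverse u = 1 + fps_X * g"
    unfolding g_def by (rule fps_ext) (simp add: u0)
  then have "u + ?p * g = 1"
    unfolding pu using inverse_mult_eq_1'[of u] u0 by (simp add: algebra_simps)
  have "fps_to_fls ?p * fls_X_inv = fps_to_fls u"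
    unfolding pu fls_times_fps_to_fls
    by (simp add: mult.commute[of fls_X] mult.assoc fls_X_inv_times_X)
  then have "fps_to_fls ?p * (fls_X_inv + fps_to_fls g) = fps_to_fls (u + ?p * g)"
    by (simp add: distrib_left fls_times_fps_to_fls)
  also have "\<dots> = 1"
    using \<open>u + ?p * g = 1\<close> by simp
  finally show ?thesis
    by (metis inverse_unique)
qed

lemma inverse_inv_phi_equation:
  "inverse (fps_to_fls (inv_phi \<beta> c)) + fls_const \<beta> / inverse (fps_to_fls (inv_phi \<beta> c)) =
    fls_X_inv + fls_const \<beta> * fls_X + fls_const c"
proof -
  define a where "a = fps_to_fls (inv_phi \<beta> c)"
  define X where "X = (fls_X :: complex fls)"
  have a: "a \<noteq> 0"
    unfolding a_def using inv_phi_nth_1[of \<beta> c] by (metis fps_to_fls_eq_0_iff fps_zero_nth zero_neq_one)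
  have X: "X \<noteq> 0"
    unfolding X_def by simp
  have "X * (1 + fls_const \<beta> * a ^ 2) = a * (1 + fls_const c * X + fls_const \<beta> * X ^ 2)"
    using arg_cong[OF inv_phi_equation[of \<beta> c], of fps_to_fls]
    by (simp add: a_def X_def fls_times_fps_to_fls fps_to_fls_power)
  moreover have "(inverse a + fls_const \<beta> * a) * (a * X) = X * (1 + fls_const \<beta> * a ^ 2)"
    using a by (simp add: algebra_simps power2_eq_square)
  moreover have "(inverse X + fls_const \<beta> * X + fls_const c) * (a * X) = a * (1 + fls_const c * X + fls_const \<beta> * X ^ 2)"
    using X by (simp add: algebra_simps power2_eq_square)
  ultimately have "(inverse a + fls_const \<beta> * a) * (a * X) = (inverse X + fls_const \<beta> * X + fls_const c) * (a * X)"
    by (simp only:)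
  then have "inverse a + fls_const \<beta> * a = inverse X + fls_const \<beta> * X + fls_const c"
    using a X by simp
  then show ?thesis
    unfolding a_def[symmetric] X_def by (simp add: fls_inverse_X divide_inverse)
qed

lemma phi_ser_eq_inverse_inv_phi: "phi_ser \<beta> c = inverse (fps_to_fls (inv_phi \<beta> c))"
  unfolding phi_ser_def
proof (rule the_equality)
  obtain g where g: "inverse (fps_to_fls (inv_phi \<beta> c)) = fls_X_inv + fps_to_fls g"
    using inverse_inv_phi_eq by blast
  then show "(\<exists>g. inverse (fps_to_fls (inv_phi \<beta> c)) = fls_X_inv + fps_to_fls g) \<and>
      inverse (fps_to_fls (inv_phi \<beta> c)) + fls_const \<beta> / inverse (fps_to_fls (inv_phi \<beta> c)) =
      fls_X_inv + fls_const \<beta> * fls_X + fls_const c"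
    using inverse_inv_phi_equation by blast
  fix \<phi> assume "(\<exists>g. \<phi> = fls_X_inv + fps_to_fls g) \<and> \<phi> + fls_const \<beta> / \<phi> = fls_X_inv + fls_const \<beta> * fls_X + fls_const c"
  then obtain g' where "\<phi> = fls_X_inv + fps_to_fls g'" "\<phi> + fls_const \<beta> / \<phi> = fls_X_inv + fls_const \<beta> * fls_X + fls_const c"
    by blast
  then show "\<phi> = inverse (fps_to_fls (inv_phi \<beta> c))"
    using phi_equation_unique g inverse_inv_phi_equation by blast
qed

section \<open>The algebra OY_beta(gl_n)\<close>

locale oy_algebra =
  fixes sc :: "complex \<Rightarrow> 'A::ring_1" and t :: "nat \<Rightarrow> nat \<Rightarrow> nat \<Rightarrow> 'A"
    and \<beta> :: complex and n :: nat
  assumes calg: "is_calg sc" and rel: "OY_rel sc \<beta> n t"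
begin

sublocale sc: ring_1_hom sc
  using calg unfolding is_calg_def by unfold_locales blast+

lemma sc_central: "sc z * y = y * sc z"
  using calg unfolding is_calg_def by blast

abbreviation lift1 :: "complex fps \<Rightarrow> 'A fps" where
  "lift1 \<equiv> fps_map sc"

abbreviation lift2 :: "complex fps fps \<Rightarrow> 'A fps fps" where
  "lift2 \<equiv> fps_map lift1"

sublocale lift1: ring_1_hom lift1
  by (rule sc.ring_1_hom_fps_map)

sublocale lift2: ring_1_hom lift2
  by (rule lift1.ring_1_hom_fps_map)

lemma lift1_central: "lift1 k * y = y * lift1 k"
  by (rule fps_mult_commute_if_central) (simp add: sc_central)

lemma lift2_central: "lift2 k * y = y * lift2 k"
  by (rule fps_mult_commute_if_central) (simp add: lift1_central)

text \<open>Two-variable series are taken in \<open>y = v\<^sup>-\<^sup>1\<close> (outer variable) with coefficients in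
  \<open>x = u\<^sup>-\<^sup>1\<close> (inner variable). Indices outside \<open>{1..n}\<close> give the zero series, so that the
  relations hold for all indices.\<close>
definition T_fps :: "nat \<Rightarrow> nat \<Rightarrow> 'A fps" where
  "T_fps i j = (if i \<in> {1..n} \<and> j \<in> {1..n} then Abs_fps (\<lambda>r. tt t r i j) else 0)"

definition T_inner :: "nat \<Rightarrow> nat \<Rightarrow> 'A fps fps" where
  "T_inner i j = fps_const (T_fps i j)"

definition T_outer :: "nat \<Rightarrow> nat \<Rightarrow> 'A fps fps" where
  "T_outer i j = fps_map fps_const (T_fps i j)"

abbreviation x_inner :: "complex fps fps" where
  "x_inner \<equiv> fps_const fps_X"

abbreviation y_outer :: "complex fps fps" where
  "y_outer \<equiv> fps_X"

abbreviation \<beta>_const :: "complex fps fps" where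
  "\<beta>_const \<equiv> fps_const (fps_const \<beta>)"

text \<open>\<open>(y - x)(1 - \<beta> x y) = x y (u + \<beta>/u - v - \<beta>/v)\<close>.\<close>
definition exchange_factor :: "complex fps fps" where
  "exchange_factor = (y_outer - x_inner) * (1 - \<beta>_const * x_inner * y_outer)"

lemma lift2_x_inner: "lift2 x_inner = fps_const fps_X"
  by (simp add: lift1.fps_map_const sc.fps_map_X)

lemma lift2_y_outer: "lift2 y_outer = fps_X"
  by (rule lift1.fps_map_X)

lemma lift2_\<beta>_const: "lift2 \<beta>_const = fps_const (fps_const (sc \<beta>))"
  by (simp add: lift1.fps_map_const sc.fps_map_const)

lemma T_inner_outer_nth:
  assumes "i \<in> {1..n}" "j \<in> {1..n}" "k \<in> {1..n}" "l \<in> {1..n}"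
  shows "(T_inner i j * T_outer k l) $ s $ r = tt t r i j * tt t s k l"
    and "(T_outer k l * T_inner i j) $ s $ r = tt t s k l * tt t r i j"
  using assms by (simp_all add: T_inner_def T_outer_def T_fps_def)

lemma lift2_exchange_factor_mult:
  "lift2 exchange_factor * C = fps_X * C - fps_const fps_X * C
    - fps_const (fps_const (sc \<beta>)) * (fps_const fps_X * (fps_X * (fps_X * C)))
    + fps_const (fps_const (sc \<beta>)) * (fps_const fps_X * (fps_const fps_X * (fps_X * C)))"
proof -
  have "exchange_factor = y_outer - x_inner - \<beta>_const * (x_inner * (y_outer * y_outer))
      + \<beta>_const * (x_inner * (x_inner * y_outer))"
    unfolding exchange_factor_def by (simp add: algebra_simps)
  then show ?thesis
    by (simp only: lift2.hom_add lift2.hom_diff lift2.hom_mult lift2_x_inner lift2_y_outer lift2_\<beta>_const)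
      (simp add: algebra_simps)
qed

lemma exchange_relation:
  "lift2 exchange_factor * comm (T_inner i j) (T_outer k l) =
    lift2 (x_inner * y_outer) * (T_inner k j * T_outer i l - T_outer k j * T_inner i l)"
proof (cases "i \<in> {1..n} \<and> j \<in> {1..n} \<and> k \<in> {1..n} \<and> l \<in> {1..n}")
  case False
  then have "comm (T_inner i j) (T_outer k l) = 0 \<and> T_inner k j * T_outer i l - T_outer k j * T_inner i l = 0"
    unfolding comm_def T_inner_def T_outer_def T_fps_def by (auto simp: fps_eq_iff)
  then show ?thesis
    by simp
next
  case True
  define C where "C = comm (T_inner i j) (T_outer k l)"
  define M where "M = T_inner k j * T_outer i l - T_outer k j * T_inner i l"
  have C: "C $ s $ r = comm (tt t r i j) (tt t s k l)" for s r
    unfolding C_def comm_def using True by (simp add: T_inner_outer_nth)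
  have M: "M $ s $ r = tt t r k j * tt t s i l - tt t s k j * tt t r i l" for s r
    unfolding M_def using True by (simp add: T_inner_outer_nth)
  have rhs: "lift2 (x_inner * y_outer) * M = fps_const fps_X * (fps_X * M)"
    by (simp only: lift2.hom_mult lift2_x_inner lift2_y_outer mult.assoc)
  have "(lift2 exchange_factor * C) $ s $ r = (lift2 (x_inner * y_outer) * M) $ s $ r" for s r
  proof (cases s; cases r)
    fix s' r' assume s: "s = Suc s'" and r: "r = Suc r'"
    have "comm (tt t (r' + 1) i j) (tt t s' k l)
       + (if r' \<ge> 1 then sc \<beta> * comm (tt t (r' - 1) i j) (tt t s' k l) else 0)
       - comm (tt t r' i j) (tt t (s' + 1) k l)
       - (if s' \<ge> 1 then sc \<beta> * comm (tt t r' i j) (tt t (s' - 1) k l) else 0)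
       = tt t r' k j * tt t s' i l - tt t s' k j * tt t r' i l"
      using rel True unfolding OY_rel_def by blast
    then show ?thesis
      unfolding lift2_exchange_factor_mult rhs s r by (cases r'; cases s') (simp_all add: C M comm_def algebra_simps)
  qed (simp_all add: lift2_exchange_factor_mult rhs C comm_def tt_def)
  then show ?thesis
    unfolding C_def M_def by (simp add: fps_eq_iff)
qed

definition T_phi :: "complex \<Rightarrow> nat \<Rightarrow> nat \<Rightarrow> 'A fps" where
  "T_phi c i j = fps_subst sc (inv_phi \<beta> c) (T_fps i j)"

definition T_phi_outer :: "complex \<Rightarrow> nat \<Rightarrow> nat \<Rightarrow> 'A fps fps" where
  "T_phi_outer c i j = fps_map fps_const (T_phi c i j)"

definition inv_phi_outer :: "complex \<Rightarrow> complex fps fps" where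
  "inv_phi_outer c = fps_map fps_const (inv_phi \<beta> c)"

text \<open>\<open>shifted_factor z = x y (u + \<beta>/u - v - \<beta>/v + z) = x y (u + \<beta>/u - phi_{-z}(v) - \<beta>/phi_{-z}(v))\<close>.\<close>
definition shifted_factor :: "int \<Rightarrow> complex fps fps" where
  "shifted_factor z = exchange_factor + of_int z * (x_inner * y_outer)"

lemma fps_subst_setting_sc: "fps_subst_setting sc (inv_phi \<beta> c)"
  by (intro fps_subst_setting.intro sc.ring_1_hom_axioms fps_subst_setting_axioms.intro sc_central inv_phi_nth_0)

lemma fps_subst_setting_sc_const: "fps_subst_setting (\<lambda>z. fps_const (sc z)) (inv_phi \<beta> c)"
proof (intro fps_subst_setting.intro fps_subst_setting_axioms.intro inv_phi_nth_0)
  show "ring_1_hom (\<lambda>z. fps_const (sc z))"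
    by unfold_locales (simp_all add: sc.hom_add sc.hom_mult sc.hom_one)
  show "fps_const (sc z) * y = y * fps_const (sc z)" for z y
    by (rule fps_mult_commute_if_central) (simp add: sc_central)
qed

lemma fps_subst_setting_id: "fps_subst_setting (\<lambda>z::complex. z) (inv_phi \<beta> c)"
  by (intro fps_subst_setting.intro ring_1_hom_id fps_subst_setting_axioms.intro inv_phi_nth_0) simp

lemma fps_subst_setting_const: "fps_subst_setting (fps_const :: complex \<Rightarrow> complex fps) (inv_phi \<beta> c)"
  by (intro fps_subst_setting.intro ring_1_hom_fps_const fps_subst_setting_axioms.intro inv_phi_nth_0)
    (simp add: mult.commute)

lemma subst_outer_simps:
  "fps_subst fps_const (inv_phi \<beta> c) x_inner = x_inner"
  "fps_subst fps_const (inv_phi \<beta> c) y_outer = inv_phi_outer c"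
  "fps_subst fps_const (inv_phi \<beta> c) \<beta>_const = \<beta>_const"
  using fps_subst_setting.fps_subst_const[OF fps_subst_setting_const]
    fps_subst_setting.fps_subst_X[OF fps_subst_setting_const]
  unfolding inv_phi_outer_def by simp_all

lemma y_outer_times_subst_exchange_factor:
  assumes "c = - of_int z"
  shows "y_outer * fps_subst fps_const (inv_phi \<beta> c) exchange_factor = inv_phi_outer c * shifted_factor z"
proof -
  interpret S: ring_1_hom "fps_subst fps_const (inv_phi \<beta> c)"
    by (rule fps_subst_setting.ring_1_hom_fps_subst[OF fps_subst_setting_const])
  interpret const: ring_1_hom "fps_map (fps_const :: complex \<Rightarrow> complex fps)"
    by (rule ring_1_hom.ring_1_hom_fps_map[OF ring_1_hom_fps_const])
  have "fps_map fps_const (fps_X * (1 + fps_const \<beta> * inv_phi \<beta> c ^ 2)) =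
      fps_map fps_const (inv_phi \<beta> c * (1 + fps_const c * fps_X + fps_const \<beta> * fps_X ^ 2))"
    using inv_phi_equation by simp
  then have "y_outer * (1 + \<beta>_const * inv_phi_outer c ^ 2) =
      inv_phi_outer c * (1 + fps_const (fps_const c) * y_outer + \<beta>_const * y_outer ^ 2)"
    unfolding inv_phi_outer_def
    by (simp only: const.hom_add const.hom_mult const.hom_power const.hom_one
        ring_1_hom.fps_map_X[OF ring_1_hom_fps_const] ring_1_hom.fps_map_const[OF ring_1_hom_fps_const])
  moreover have "fps_const (fps_const c) = - (of_int z :: complex fps fps)"
    unfolding assms by (simp add: fps_of_int[symmetric])
  ultimately have "y_outer * (1 + \<beta>_const * inv_phi_outer c ^ 2) =
      inv_phi_outer c * (1 - of_int z * y_outer + \<beta>_const * y_outer ^ 2)"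
    by simp
  then show ?thesis
    unfolding exchange_factor_def S.hom_mult S.hom_diff S.hom_one subst_outer_simps shifted_factor_def
      exchange_factor_def
    by algebra
qed

lemma y_outer_times_subst_xy:
  "y_outer * fps_subst fps_const (inv_phi \<beta> c) (x_inner * y_outer) = inv_phi_outer c * (x_inner * y_outer)"
  unfolding ring_1_hom.hom_mult[OF fps_subst_setting.ring_1_hom_fps_subst[OF fps_subst_setting_const]]
    subst_outer_simps
  by (simp add: algebra_simps)

lemma exchange_relation_phi:
  assumes "c = - of_int z"
  shows "lift2 (shifted_factor z) * comm (T_inner i j) (T_phi_outer c k l) =
    lift2 (x_inner * y_outer) * (T_inner k j * T_phi_outer c i l - T_phi_outer c k j * T_inner i l)"
proof -
  let ?S = "fps_subst (\<lambda>z. fps_const (sc z)) (inv_phi \<beta> c)" and ?Sc = "fps_subst fps_const (inv_phi \<beta> c)"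
  interpret S: ring_1_hom ?S
    by (rule fps_subst_setting.ring_1_hom_fps_subst[OF fps_subst_setting_sc_const])
  have S_inner: "?S (T_inner a b) = T_inner a b" for a b
    unfolding T_inner_def by (rule fps_subst_setting.fps_subst_const[OF fps_subst_setting_sc_const])
  have S_outer: "?S (T_outer a b) = T_phi_outer c a b" for a b
    unfolding T_outer_def T_phi_outer_def T_phi_def
    by (rule fps_subst_natural[symmetric, OF ring_1_hom_fps_const]) simp
  have S_lift2: "?S (lift2 k) = lift2 (?Sc k)" for k
    by (rule fps_subst_natural[symmetric, OF lift1.ring_1_hom_axioms]) (simp add: sc.fps_map_const)
  have "?S (lift2 exchange_factor * comm (T_inner i j) (T_outer k l)) =
      ?S (lift2 (x_inner * y_outer) * (T_inner k j * T_outer i l - T_outer k j * T_inner i l))"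
    using exchange_relation by simp
  then have "lift2 (?Sc exchange_factor) * comm (T_inner i j) (T_phi_outer c k l) =
      lift2 (?Sc (x_inner * y_outer)) * (T_inner k j * T_phi_outer c i l - T_phi_outer c k j * T_inner i l)"
    unfolding comm_def by (simp only: S.hom_mult S.hom_diff S_inner S_outer S_lift2)
  then have "lift2 (y_outer * ?Sc exchange_factor) * comm (T_inner i j) (T_phi_outer c k l) =
      lift2 (y_outer * ?Sc (x_inner * y_outer)) * (T_inner k j * T_phi_outer c i l - T_phi_outer c k j * T_inner i l)"
    by (simp only: lift2.hom_mult mult.assoc)
  then have "lift2 (inv_phi_outer c) * (lift2 (shifted_factor z) * comm (T_inner i j) (T_phi_outer c k l)
      - lift2 (x_inner * y_outer) * (T_inner k j * T_phi_outer c i l - T_phi_outer c k j * T_inner i l)) = 0"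
    unfolding y_outer_times_subst_exchange_factor[OF assms] y_outer_times_subst_xy
    by (simp add: lift2.hom_mult mult.assoc right_diff_distrib)
  moreover have "lift2 (inv_phi_outer c) $ 0 = 0" "lift2 (inv_phi_outer c) $ 1 = 1"
    unfolding inv_phi_outer_def using inv_phi_nth_0[of \<beta> c] inv_phi_nth_1[of \<beta> c]
    by (simp_all add: sc.fps_map_const sc.hom_one lift1.hom_one)
  ultimately show ?thesis
    using fps_mult_eq_0_cancel_order_one by fastforce
qed

lemma subst_inner_simps:
  "fps_map (fps_subst (\<lambda>z::complex. z) (inv_phi \<beta> c)) x_inner = fps_const (inv_phi \<beta> c)"
  "fps_map (fps_subst (\<lambda>z::complex. z) (inv_phi \<beta> c)) y_outer = y_outer"
  "fps_map (fps_subst (\<lambda>z::complex. z) (inv_phi \<beta> c)) \<beta>_const = \<beta>_const"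
  using fps_subst_setting.ring_1_hom_fps_subst[OF fps_subst_setting_id]
  by (simp_all add: ring_1_hom.fps_map_const ring_1_hom.fps_map_X fps_map_id
      fps_subst_setting.fps_subst_X[OF fps_subst_setting_id] fps_subst_setting.fps_subst_const[OF fps_subst_setting_id])

lemma diag_subst_inner_xy:
  "fps_diag (fps_map (fps_subst (\<lambda>z::complex. z) (inv_phi \<beta> c)) (x_inner * y_outer)) = inv_phi \<beta> c * fps_X"
proof -
  interpret S: ring_1_hom "fps_map (fps_subst (\<lambda>z::complex. z) (inv_phi \<beta> c))"
    by (rule ring_1_hom.ring_1_hom_fps_map[OF fps_subst_setting.ring_1_hom_fps_subst[OF fps_subst_setting_id]])
  interpret diag: ring_1_hom "fps_diag :: complex fps fps \<Rightarrow> complex fps"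
    by (rule ring_1_hom_fps_diag)
  show ?thesis
    by (simp only: S.hom_mult subst_inner_simps diag.hom_mult fps_diag_const fps_diag_X)
qed

lemma diag_subst_inner_shifted_factor:
  assumes "c = - of_int z"
  shows "fps_diag (fps_map (fps_subst (\<lambda>z::complex. z) (inv_phi \<beta> c)) (shifted_factor (z + 1))) = inv_phi \<beta> c * fps_X"
proof -
  interpret S: ring_1_hom "fps_map (fps_subst (\<lambda>z::complex. z) (inv_phi \<beta> c))"
    by (rule ring_1_hom.ring_1_hom_fps_map[OF fps_subst_setting.ring_1_hom_fps_subst[OF fps_subst_setting_id]])
  interpret diag: ring_1_hom "fps_diag :: complex fps fps \<Rightarrow> complex fps"
    by (rule ring_1_hom_fps_diag)
  have "fps_const c = - (of_int z :: complex fps)"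
    unfolding assms by (simp add: fps_of_int[symmetric])
  then have "fps_X * (1 + fps_const \<beta> * inv_phi \<beta> c ^ 2) =
      inv_phi \<beta> c * (1 - of_int z * fps_X + fps_const \<beta> * fps_X ^ 2)"
    using inv_phi_equation[of \<beta> c] by simp
  then show ?thesis
    unfolding shifted_factor_def exchange_factor_def
    by (simp only: S.hom_mult S.hom_add S.hom_diff S.hom_one S.hom_of_int subst_inner_simps
        diag.hom_mult diag.hom_add diag.hom_diff diag.hom_one diag.hom_of_int fps_diag_const fps_diag_X
        of_int_add of_int_1) algebra
qed

text \<open>Substitute \<open>x \<mapsto> 1/phi_{c0}(x)\<close> in the relation between \<open>T(u)\<close> and \<open>T(phi_{c1}(v))\<close> and
  put \<open>x = y\<close>: since \<open>c0 - c1 = 1\<close>, the two factors both become \<open>x/phi_{c0}(x)\<close>, which cancels.\<close>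
lemma fusion_relation:
  assumes "c0 = - of_int z" "c1 = - of_int (z + 1)"
  shows "comm (T_phi c0 i j) (T_phi c1 k l) = T_phi c0 k j * T_phi c1 i l - T_phi c1 k j * T_phi c0 i l"
proof -
  let ?S = "fps_map (fps_subst sc (inv_phi \<beta> c0))"
    and ?Sc = "fps_map (fps_subst (\<lambda>z::complex. z) (inv_phi \<beta> c0))"
  have subst_hom: "ring_1_hom (fps_subst sc (inv_phi \<beta> c0))"
    by (rule fps_subst_setting.ring_1_hom_fps_subst[OF fps_subst_setting_sc])
  interpret S: ring_1_hom ?S
    by (rule ring_1_hom.ring_1_hom_fps_map[OF subst_hom])
  interpret diag: ring_1_hom "fps_diag :: 'A fps fps \<Rightarrow> 'A fps"
    by (rule ring_1_hom_fps_diag)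
  have S_inner: "?S (T_inner a b) = fps_const (T_phi c0 a b)" for a b
    unfolding T_inner_def T_phi_def by (rule ring_1_hom.fps_map_const[OF subst_hom])
  have S_outer: "?S (T_phi_outer c1 a b) = T_phi_outer c1 a b" for a b
    unfolding T_phi_outer_def by (simp add: fps_eq_iff fps_subst_setting.fps_subst_const[OF fps_subst_setting_sc])
  have S_lift2: "?S (lift2 k) = lift2 (?Sc k)" for k
    by (simp add: fps_eq_iff fps_subst_natural[OF sc.ring_1_hom_axioms, of "\<lambda>z. z" sc, symmetric])
  have diag_outer: "fps_diag (T_phi_outer c1 a b) = T_phi c1 a b" for a b
    unfolding T_phi_outer_def by (rule fps_diag_map_const)
  have diag_lift2: "fps_diag (lift2 k) = lift1 (fps_diag k)" for k
    by (rule fps_diag_map_map[OF sc.ring_1_hom_axioms])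
  have "fps_diag (?S (lift2 (shifted_factor (z + 1)) * comm (T_inner i j) (T_phi_outer c1 k l))) =
      fps_diag (?S (lift2 (x_inner * y_outer) * (T_inner k j * T_phi_outer c1 i l - T_phi_outer c1 k j * T_inner i l)))"
    using exchange_relation_phi[OF assms(2)] by simp
  then have "lift1 (fps_diag (?Sc (shifted_factor (z + 1)))) * comm (T_phi c0 i j) (T_phi c1 k l) =
      lift1 (fps_diag (?Sc (x_inner * y_outer)))
        * (T_phi c0 k j * T_phi c1 i l - T_phi c1 k j * T_phi c0 i l)"
    unfolding comm_def
    by (simp only: S.hom_mult S.hom_diff S_inner S_outer S_lift2 diag.hom_mult diag.hom_diff fps_diag_const
        diag_outer diag_lift2)
  then have "lift1 (inv_phi \<beta> c0) * (fps_X * (comm (T_phi c0 i j) (T_phi c1 k l)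
      - (T_phi c0 k j * T_phi c1 i l - T_phi c1 k j * T_phi c0 i l))) = 0"
    unfolding diag_subst_inner_xy diag_subst_inner_shifted_factor[OF assms(1)]
    by (simp add: lift1.hom_mult sc.fps_map_X mult.assoc right_diff_distrib)
  moreover have "lift1 (inv_phi \<beta> c0) $ 0 = 0" "lift1 (inv_phi \<beta> c0) $ 1 = 1"
    using inv_phi_nth_0[of \<beta> c0] inv_phi_nth_1[of \<beta> c0] by (simp_all add: sc.hom_one)
  moreover have "(fps_X :: 'A fps) $ 0 = 0" "(fps_X :: 'A fps) $ 1 = 1"
    by simp_all
  ultimately show ?thesis
    using fps_mult_eq_0_cancel_order_one by (metis right_minus_eq)
qed

lemma T_phi_outer_fusion:
  "comm (T_phi_outer (- of_nat r) i j) (T_phi_outer (- of_nat (Suc r)) k l) =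
    T_phi_outer (- of_nat r) k j * T_phi_outer (- of_nat (Suc r)) i l
    - T_phi_outer (- of_nat (Suc r)) k j * T_phi_outer (- of_nat r) i l"
proof -
  interpret const: ring_1_hom "fps_map (fps_const :: 'A \<Rightarrow> 'A fps)"
    by (rule ring_1_hom.ring_1_hom_fps_map[OF ring_1_hom_fps_const])
  have "comm (T_phi (- of_nat r) i j) (T_phi (- of_nat (Suc r)) k l) =
      T_phi (- of_nat r) k j * T_phi (- of_nat (Suc r)) i l - T_phi (- of_nat (Suc r)) k j * T_phi (- of_nat r) i l"
    by (rule fusion_relation[of _ "int r"]) simp_all
  then show ?thesis
    unfolding T_phi_outer_def comm_def const.hom_diff[symmetric] const.hom_mult[symmetric] by simp
qed

lemma lift2_shifted_factor_mult_eq_0D: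
  assumes "lift2 (shifted_factor z) * x = 0"
  shows "x = 0"
  using assms
proof (rule fps_mult_eq_0_cancel_left[rotated])
  fix y assume "lift2 (shifted_factor z) $ 0 * y = 0"
  then have "fps_X * y = 0"
    by (simp add: shifted_factor_def exchange_factor_def lift1.hom_minus sc.fps_map_X)
  then show "y = 0"
    using fps_mult_eq_0_cancel_order_one[of fps_X y] by simp
qed

lemma of_nat_mult_eq_0D:
  assumes "m > 0" "of_nat m * x = (0 :: 'A fps fps)"
  shows "x = 0"
proof -
  have "fps_const (fps_const (inverse (of_nat m))) * (of_nat m :: complex fps fps) = 1"
    using assms(1) by (simp add: fps_of_nat[symmetric])
  then have "lift2 (fps_const (fps_const (inverse (of_nat m)))) * of_nat m = 1"
    by (metis lift2.hom_mult lift2.hom_of_nat lift2.hom_one)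
  then show ?thesis
    using assms(2) by (metis mult.assoc mult_1 mult_zero_right)
qed

sublocale M: minor_setting T_inner "\<lambda>r. T_phi_outer (- of_nat r)" "\<lambda>k x. lift2 k * x" shifted_factor
  "x_inner * y_outer"
proof unfold_locales
  fix c c' :: "complex fps fps" and x y :: "'A fps fps"
  show "lift2 c * x * y = lift2 c * (x * y)" "lift2 c * (x + y) = lift2 c * x + lift2 c * y"
    "lift2 c * (lift2 c' * x) = lift2 (c * c') * x" "lift2 (c + c') * x = lift2 c * x + lift2 c' * x"
    by (simp_all add: mult.assoc distrib_left distrib_right lift2.hom_mult lift2.hom_add)
  show "x * (lift2 c * y) = lift2 c * (x * y)"
    by (metis lift2_central mult.assoc)
next
  show "shifted_factor (z + 1) = shifted_factor z + x_inner * y_outer" for z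
    unfolding shifted_factor_def by (simp add: algebra_simps)
  show "lift2 (shifted_factor (int r)) * comm (T_inner i j) (T_phi_outer (- of_nat r) k l) =
      lift2 (x_inner * y_outer) * (T_inner k j * T_phi_outer (- of_nat r) i l - T_phi_outer (- of_nat r) k j * T_inner i l)"
    for r i j k l
    by (rule exchange_relation_phi) simp
qed (fact T_phi_outer_fusion lift2_shifted_factor_mult_eq_0D of_nat_mult_eq_0D)+

text \<open>\<open>m!\<close> times the quantum minor \<open>t^{a_1...a_m}_{b_1...b_m}(v)\<close>, as a series in \<open>v\<^sup>-\<^sup>1\<close>.\<close>
definition qminor_fps :: "nat \<Rightarrow> (nat \<Rightarrow> nat) \<Rightarrow> (nat \<Rightarrow> nat) \<Rightarrow> 'A fps" where
  "qminor_fps m a b = (\<Sum>\<sigma> | \<sigma> permutes {1..m}. of_int (sign \<sigma>) *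
     prod_list (map (\<lambda>k. T_phi (- of_nat (k - 1)) (a (\<sigma> k)) (b k)) [1..<Suc m]))"

lemma minor_eq_qminor_fps: "M.minor 1 m a b = fps_map fps_const (qminor_fps m a b)"
proof -
  interpret const: ring_1_hom "fps_map (fps_const :: 'A \<Rightarrow> 'A fps)"
    by (rule ring_1_hom.ring_1_hom_fps_map[OF ring_1_hom_fps_const])
  show ?thesis
    unfolding M.minor_def alt_sum_def M.minor_term_def qminor_fps_def
    by (simp add: const.hom_sum const.hom_mult const.hom_of_int const.hom_prod_list T_phi_outer_def o_def)
qed

lemma T_phi_nth:
  assumes "i \<in> {1..n}" "j \<in> {1..n}"
  shows "T_phi c i j $ N = Tphi sc t \<beta> c N i j"
proof -
  have "inverse (phi_ser \<beta> c) = fps_to_fls (inv_phi \<beta> c)"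
    by (simp add: phi_ser_eq_inverse_inv_phi)
  then have "fls_nth (inverse (phi_ser \<beta> c) ^ r) (int N) = (inv_phi \<beta> c ^ r) $ N" for r
    by (simp add: fps_to_fls_power[symmetric])
  then show ?thesis
    unfolding T_phi_def fps_subst_nth Tphi_def T_fps_def using assms by simp
qed

lemma qminor_eq_qminor_fps_nth:
  assumes "\<forall>k\<in>{1..m}. a k \<in> {1..n} \<and> b k \<in> {1..n}"
  shows "qminor sc t \<beta> m a b N = sc (inverse (of_nat (fact m))) * qminor_fps m a b $ N"
proof -
  have "prod_list (map (\<lambda>k. T_phi (- of_nat (k - 1)) (a (\<sigma> k)) (b k)) [1..<Suc m]) $ N =
      (\<Sum>Ns\<in>weak_compositions m N.
        prod_list (map (\<lambda>k. Tphi sc t \<beta> (- of_nat (k - 1)) (Ns k) (a (\<sigma> k)) (b k)) [1..<Suc m]))"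
    if \<sigma>: "\<sigma> permutes {1..m}" for \<sigma>
    unfolding fps_prod_list_nth
  proof (rule sum.cong[OF refl], rule arg_cong[where f = prod_list], rule map_cong[OF refl])
    fix Ns k assume "k \<in> set [1..<Suc m]"
    then have "k \<in> {1..m}"
      by auto
    moreover from this have "\<sigma> k \<in> {1..m}"
      using permutes_in_image[OF \<sigma>] by simp
    ultimately show "T_phi (- of_nat (k - 1)) (a (\<sigma> k)) (b k) $ Ns k =
        Tphi sc t \<beta> (- of_nat (k - 1)) (Ns k) (a (\<sigma> k)) (b k)"
      using assms by (intro T_phi_nth) auto
  qed
  then show ?thesis
    unfolding qminor_def qminor_fps_def fps_sum_nth weak_compositions_def
    by (simp add: fps_of_int[symmetric])
qed

lemma entry_commutes_qminor_fps:
  assumes "\<forall>k\<in>{1..m}. a k \<in> {1..n} \<and> b k \<in> {1..n}" "i \<in> {1..m}" "j \<in> {1..m}" "1 \<le> r"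
  shows "t r (a i) (b j) * qminor_fps m a b $ N = qminor_fps m a b $ N * t r (a i) (b j)"
proof -
  have "comm (T_inner (a i) (b j)) (fps_map fps_const (qminor_fps m a b)) = 0"
    using M.minor_commutes_entry[OF assms(2,3)] unfolding minor_eq_qminor_fps .
  then have "comm (T_inner (a i) (b j)) (fps_map fps_const (qminor_fps m a b)) $ N $ r = 0"
    by simp
  then show ?thesis
    using assms unfolding comm_def T_inner_def T_fps_def by (auto simp: tt_def)
qed

end

theorem mainTheorem10:
  fixes sc :: "complex \<Rightarrow> 'A::ring_1"
    and t :: "nat \<Rightarrow> nat \<Rightarrow> nat \<Rightarrow> 'A"
    and \<beta> :: complex and n m :: nat and a b :: "nat \<Rightarrow> nat" and i j :: nat
  assumes "n \<ge> 1" and "\<beta> \<noteq> 0" and "1 \<le> m" and "m \<le> n"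
    and "\<forall>k\<in>{1..m}. a k \<in> {1..n} \<and> b k \<in> {1..n}"
    and "is_calg sc" and "OY_rel sc \<beta> n t"
    and "i \<in> {1..m}" and "j \<in> {1..m}"
  shows "\<forall>r\<ge>1. \<forall>N. t r (a i) (b j) * qminor sc t \<beta> m a b N
                    = qminor sc t \<beta> m a b N * t r (a i) (b j)"
proof (intro allI impI)
  fix r N :: nat
  assume "1 \<le> r"
  interpret oy_algebra sc t \<beta> n
    using assms(6,7) by unfold_locales
  have "t r (a i) (b j) * qminor_fps m a b $ N = qminor_fps m a b $ N * t r (a i) (b j)"
    using assms(5,8,9) \<open>1 \<le> r\<close> by (rule entry_commutes_qminor_fps)
  then show "t r (a i) (b j) * qminor sc t \<beta> m a b N = qminor sc t \<beta> m a b N * t r (a i) (b j)"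
    unfolding qminor_eq_qminor_fps_nth[OF assms(5)] by (metis sc_central mult.assoc)
qed

end
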